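(* Let $m>1$, $D>0$, $r>0$, and let $b,d$ satisfy the standing assumptions below. For $c>0$ let $\phi_c$ be the function obtained by the delayed step-by-step construction described below. Then there exists a constant $\underline c>0$ such that for every $c\in(0,\underline c]$, $\phi_c$ decays to zero in finite time, i.e., there is $T\in(0,\infty)$ with $\phi_c>0$ on $(0,T)$ and $\phi_c(T)=0$.
   Context: Standing assumptions: $d\in C^2([0,+\infty))$ with $d(0)=0$, $d'(s)>0$, $d''(s)\ge0$ for $s>0$; $b\in C^1([0,+\infty);[0,+\infty))$ has exactly one positive local extremum point $s_M$ (its global maximum point), $b(0)=0$, there is $\kappa>0$ with $b(\kappa)=d(\kappa)$, $b'(0)>d'(0)$, $b'(\kappa)<d'(\kappa)$, $d(s)<b(s)\le b'(0)s$ for $s\in(0,\kappa)$, and $s_M<\kappa$. Construction of $\phi_c$: set $\phi_c(t)=0$ for $t\le0$. On $[0,cr)$ let $\phi_c=\phi_c^1$ be the maximal solution of $c\phi'=D(\phi^m)''-d(\phi)$ on $(0,cr)$ with $\phi(0)=0$, $(\phi^m)'(0)=0$, which is positive on $(0,cr)$. Inductively, for $k\ge2$, on $[(k-1)cr,kcr)$ let $\phi_c=\phi_c^k$ solve the initial value problem $$c\phi'(t)=D(\phi^m(t))''-d(\phi(t))+b(\phi_c^{k-1}(t-cr)),\qquad \phi((k-1)cr)=\phi_c^{k-1}((k-1)cr),\ \phi'((k-1)cr)=(\phi_c^{k-1})'((k-1)cr).$$ The construction is continued step by step as long as $\phi_c$ stays positive and finite; it stops if $\phi_c$ blows up or decays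 to zero in finite time; otherwise $\phi_c$ is defined on all of $(0,+\infty)$. *)

theory Defs
  imports "HOL-Analysis.Analysis"
begin

definition local_extremum_at :: "(real \<Rightarrow> real) \<Rightarrow> real \<Rightarrow> bool" where
  "local_extremum_at f s \<longleftrightarrow>
     (\<exists>e>0. (\<forall>y. 0 < y \<and> \<bar>y - s\<bar> < e \<longrightarrow> f y \<le> f s)
          \<or> (\<forall>y. 0 < y \<and> \<bar>y - s\<bar> < e \<longrightarrow> f s \<le> f y))"

text \<open>phi solves the delayed degenerate equation
  c phi' = D (phi^m)'' - d(phi) + b(phi(t - c r)) on (0,L), with phi = 0 on (-inf,0],
  phi > 0 on (0,L), phi^m in C^1 on (-inf,L) (so phi(0)=0 and (phi^m)'(0)=0).
  Since b(0)=0 and phi = 0 on (-inf,0], on (0,cr) this is the first-step equation; gluing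
  of phi and phi' at the points k c r is encoded by the global regularity.\<close>
definition wave_sol ::
  "real \<Rightarrow> real \<Rightarrow> real \<Rightarrow> (real \<Rightarrow> real) \<Rightarrow> (real \<Rightarrow> real) \<Rightarrow> real \<Rightarrow> (real \<Rightarrow> real) \<Rightarrow> ereal \<Rightarrow> bool"
  where
  "wave_sol m D r b d c \<phi> L \<longleftrightarrow>
     0 < L \<and>
     (\<forall>t\<le>0. \<phi> t = 0) \<and>
     (\<forall>t. 0 < t \<and> ereal t < L \<longrightarrow> 0 < \<phi> t) \<and>
     continuous_on {t. ereal t < L} \<phi> \<and>
     (\<forall>t. ereal t < L \<longrightarrow> (\<lambda>s. \<phi> s powr m) differentiable (at t)) \<and>
     continuous_on {t. ereal t < L} (deriv (\<lambda>s. \<phi> s powr m)) \<and>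
     deriv (\<lambda>s. \<phi> s powr m) 0 = 0 \<and>
     (\<forall>t. 0 < t \<and> ereal t < L \<longrightarrow>
        \<phi> differentiable (at t) \<and>
        deriv (\<lambda>s. \<phi> s powr m) differentiable (at t) \<and>
        c * deriv \<phi> t = D * deriv (deriv (\<lambda>s. \<phi> s powr m)) t - d (\<phi> t) + b (\<phi> (t - c * r)))"

text \<open>phi_c on its maximal interval (0,L) of positive existence: a solution that admits no
  proper extension.\<close>
definition wave_profile ::
  "real \<Rightarrow> real \<Rightarrow> real \<Rightarrow> (real \<Rightarrow> real) \<Rightarrow> (real \<Rightarrow> real) \<Rightarrow> real \<Rightarrow> (real \<Rightarrow> real) \<Rightarrow> ereal \<Rightarrow> bool"
  where
  "wave_profile m D r b d c \<phi> L \<longleftrightarrow>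
     wave_sol m D r b d c \<phi> L \<and>
     (\<forall>\<psi> L'. wave_sol m D r b d c \<psi> L' \<and> L \<le> L' \<and> (\<forall>t. ereal t < L \<longrightarrow> \<psi> t = \<phi> t)
        \<longrightarrow> L' = L)"

end

theory Submission
  imports Defs
begin

(* Since b'(0) > d'(0), near 0 we have d s <= delta s and beta s <= b s with delta < beta.
   Integrating the equation once gives
     D (phi^m)'(t) = c phi(t) + int_0^t (d (phi s) - b (phi (s - c r))) ds.
   While phi <= eps this yields D (phi^m)' <= A - (beta - delta) I, where I(t) = int_0^t phi
   and A = c eps (1 + beta r); multiplying by phi and integrating gives the energy bound
     m/(m+1) phi^(m+1) <= (A I - (beta - delta) I^2 / 2) / D <= A^2 / (2 (beta - delta) D),
   so for small c the profile never reaches eps.  Then I stays bounded, while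
   D phi^m - c I - beta int_(t - c r)^t I decreases at a rate at least (beta - delta) I(1) > 0,
   so the profile cannot live forever.  At the end T of its life (phi^m)' is bounded below,
   hence phi has a limit at T; a positive limit would allow a continuation past T (obtained
   from a contraction argument for the integrated equation), contradicting maximality. *)

lemma ereal_le_less_trans: "s \<le> t \<Longrightarrow> ereal t < L \<Longrightarrow> ereal s < L"
  by (meson ereal_less_eq(3) le_less_trans)

lemma open_Collect_ereal_less: "open {t::real. ereal t < L}"
  by (rule open_Collect_less) (auto intro: continuous_on_ereal continuous_on_id continuous_on_const)

lemma DERIV_within_atLeast_imp_DERIV:
  assumes "(f has_real_derivative f') (at x within {a..})" "a < x"
  shows "(f has_real_derivative f') (at x)"
  using assms at_within_interior[of x "{a..}"] by simp

lemma continuous_on_atLeast_of_DERIV: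
  fixes f f' :: "real \<Rightarrow> real"
  assumes "\<forall>s\<ge>a. (f has_real_derivative f' s) (at s within {a..})"
  shows "continuous_on {a..} f"
  using assms by (auto simp: continuous_on_eq_continuous_within intro: DERIV_continuous)

lemma nonneg_of_DERIV_nonneg_atLeast:
  fixes f f' :: "real \<Rightarrow> real"
  assumes der: "\<forall>s\<ge>0. (f has_real_derivative f' s) (at s within {0..})"
    and f'_nonneg: "\<And>s. 0 < s \<Longrightarrow> 0 \<le> f' s" and f0: "f 0 = 0" and s: "0 \<le> s"
  shows "0 \<le> f s"
proof -
  have "f 0 \<le> f s"
  proof (rule DERIV_nonneg_imp_increasing_open[of 0 s f, OF s])
    fix x assume x: "0 < x" "x < s"
    have "(f has_real_derivative f' x) (at x)"
      using der x by (intro DERIV_within_atLeast_imp_DERIV[of _ _ _ 0]) auto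
    then show "\<exists>y. (f has_real_derivative y) (at x) \<and> 0 \<le> y"
      using f'_nonneg x by (intro exI[of _ "f' x"]) auto
  qed (rule continuous_on_subset[OF continuous_on_atLeast_of_DERIV[OF der]], auto)
  then show ?thesis using f0 by simp
qed

lemma linear_bounds_near_zero:
  fixes f f' :: "real \<Rightarrow> real"
  assumes der: "\<forall>s\<ge>0. (f has_real_derivative f' s) (at s within {0..})"
    and f'_cont: "continuous_on {0..} f'" and f0: "f 0 = 0"
    and lo: "a < f' 0" and hi: "f' 0 < a'"
  shows "\<exists>\<epsilon>>0. \<forall>s\<in>{0..\<epsilon>}. a * s \<le> f s \<and> f s \<le> a' * s"
proof -
  have "continuous (at 0 within {0..}) f'"
    using f'_cont by (simp add: continuous_on_eq_continuous_within)
  then have "\<forall>\<epsilon>>0. \<exists>e>0. \<forall>s\<in>{0..}. \<bar>s\<bar> < e \<longrightarrow> \<bar>f' s - f' 0\<bar> < \<epsilon>"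
    unfolding continuous_within_eps_delta dist_real_def by simp
  from this[rule_format, of "min (f' 0 - a) (a' - f' 0)"] lo hi
  obtain e where e: "e > 0" and near0: "\<forall>s\<in>{0..}. \<bar>s\<bar> < e \<longrightarrow> \<bar>f' s - f' 0\<bar> < min (f' 0 - a) (a' - f' 0)"
    by auto
  have near: "a < f' s \<and> f' s < a'" if "0 \<le> s" "s < e" for s
    using near0 that by (auto simp: abs_less_iff)
  note f_cont = continuous_on_atLeast_of_DERIV[OF der]
  have "a * s \<le> f s \<and> f s \<le> a' * s" if s: "s \<in> {0..e/2}" for s
  proof
    have der_at: "(f has_real_derivative f' x) (at x)" if "0 < x" "x < s" for x
      using der that by (intro DERIV_within_atLeast_imp_DERIV[of _ _ _ 0]) auto
    have "f 0 - a * 0 \<le> f s - a * s"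
    proof (rule DERIV_nonneg_imp_increasing_open[of 0 s "\<lambda>x. f x - a * x"])
      fix x assume x: "0 < x" "x < s"
      show "\<exists>y. ((\<lambda>x. f x - a * x) has_real_derivative y) (at x) \<and> 0 \<le> y"
        using der_at[OF x] near[of x] x s
        by (intro exI[of _ "f' x - a"]) (auto intro!: derivative_eq_intros)
    qed (use s in \<open>auto intro!: continuous_intros continuous_on_subset[OF f_cont]\<close>)
    then show "a * s \<le> f s" using f0 by simp
    have "a' * 0 - f 0 \<le> a' * s - f s"
    proof (rule DERIV_nonneg_imp_increasing_open[of 0 s "\<lambda>x. a' * x - f x"])
      fix x assume x: "0 < x" "x < s"
      show "\<exists>y. ((\<lambda>x. a' * x - f x) has_real_derivative y) (at x) \<and> 0 \<le> y"
        using der_at[OF x] near[of x] x s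
        by (intro exI[of _ "a' - f' x"]) (auto intro!: derivative_eq_intros)
    qed (use s in \<open>auto intro!: continuous_intros continuous_on_subset[OF f_cont]\<close>)
    then show "f s \<le> a' * s" using f0 by simp
  qed
  then show ?thesis using e by (intro exI[of _ "e/2"]) auto
qed

lemma linear_bounds_of_derivative_gap:
  fixes b d b' d' :: "real \<Rightarrow> real"
  assumes d_der: "\<forall>s\<ge>0. (d has_real_derivative d' s) (at s within {0..})"
    and d'_cont: "continuous_on {0..} d'" and d0: "d 0 = 0"
    and b_der: "\<forall>s\<ge>0. (b has_real_derivative b' s) (at s within {0..})"
    and b'_cont: "continuous_on {0..} b'" and b0: "b 0 = 0"
    and gap: "0 \<le> d' 0" "d' 0 < b' 0"
  shows "\<exists>\<epsilon> \<delta> \<beta>. 0 < \<epsilon> \<and> 0 \<le> \<beta> \<and> \<delta> < \<beta> \<and> (\<forall>s\<in>{0..\<epsilon>}. d s \<le> \<delta> * s) \<and> (\<forall>s\<in>{0..\<epsilon>}. \<beta> * s \<le> b s)"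
proof -
  define \<delta> where "\<delta> = (3 * d' 0 + b' 0) / 4"
  define \<beta> where "\<beta> = (d' 0 + 3 * b' 0) / 4"
  obtain \<epsilon>\<^sub>d where "0 < \<epsilon>\<^sub>d" and d_le: "\<forall>s\<in>{0..\<epsilon>\<^sub>d}. d s \<le> \<delta> * s"
    using linear_bounds_near_zero[OF d_der d'_cont d0, of "d' 0 - 1" \<delta>] gap by (auto simp: \<delta>_def)
  obtain \<epsilon>\<^sub>b where "0 < \<epsilon>\<^sub>b" and b_ge: "\<forall>s\<in>{0..\<epsilon>\<^sub>b}. \<beta> * s \<le> b s"
    using linear_bounds_near_zero[OF b_der b'_cont b0, of \<beta> "b' 0 + 1"] gap by (auto simp: \<beta>_def)
  show ?thesis
    using \<open>0 < \<epsilon>\<^sub>d\<close> \<open>0 < \<epsilon>\<^sub>b\<close> d_le b_ge gap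
    by (intro exI[of _ "min \<epsilon>\<^sub>d \<epsilon>\<^sub>b"] exI[of _ \<delta>] exI[of _ \<beta>]) (auto simp: \<delta>_def \<beta>_def)
qed

lemma exists_bound_square_less:
  fixes k Q :: real
  assumes k: "0 < k" and Q: "0 < Q"
  shows "\<exists>c\<^sub>0>0. \<forall>c. 0 < c \<and> c \<le> c\<^sub>0 \<longrightarrow> (c * k)\<^sup>2 < Q"
proof (intro exI conjI allI impI)
  show "0 < sqrt Q / (2 * k)" using k Q by simp
  fix c assume c: "0 < c \<and> c \<le> sqrt Q / (2 * k)"
  then have "c * k \<le> sqrt Q / 2" using k by (simp add: pos_le_divide_eq mult.commute)
  then have "(c * k)\<^sup>2 \<le> (sqrt Q / 2)\<^sup>2" using c k by (intro power_mono) auto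
  also have "\<dots> < Q" using Q by (simp add: power_divide)
  finally show "(c * k)\<^sup>2 < Q" .
qed

lemma lipschitz_on_interval_of_continuous_derivative:
  fixes f f' :: "real \<Rightarrow> real"
  assumes der: "\<And>s. s \<in> {a..b} \<Longrightarrow> (f has_real_derivative f' s) (at s within {a..b})"
    and f'_cont: "continuous_on {a..b} f'"
  shows "\<exists>K. K-lipschitz_on {a..b} f"
proof -
  obtain K0 where K0: "\<forall>s\<in>{a..b}. norm (f' s) \<le> K0"
    using compact_imp_bounded[OF compact_continuous_image[OF f'_cont compact_Icc]]
    unfolding bounded_iff by blast
  have "(max K0 0)-lipschitz_on {a..b} f"
  proof (rule lipschitz_onI)
    fix x y assume "x \<in> {a..b}" "y \<in> {a..b}"
    then show "dist (f x) (f y) \<le> max K0 0 * dist x y"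
      using field_differentiable_bound[OF convex_real_interval(5) der, of "max K0 0" x y] K0
      by (force simp: dist_norm)
  qed simp
  then show ?thesis ..
qed

lemma lipschitz_on_powr:
  fixes lo q :: real
  assumes lo: "0 < lo" and q: "0 < q" "q \<le> 1"
  shows "(q * lo powr (q - 1))-lipschitz_on {lo..} (\<lambda>x. x powr q)"
proof (rule lipschitz_onI)
  have der: "((\<lambda>x. x powr q) has_real_derivative q * z powr (q - 1)) (at z within {lo..})"
    if "z \<in> {lo..}" for z
    using that lo by (auto intro: has_field_derivative_at_within[OF has_real_derivative_powr])
  have bound: "norm (q * z powr (q - 1)) \<le> q * lo powr (q - 1)" if "z \<in> {lo..}" for z
    using that lo q powr_mono2'[of "q - 1" lo z] by (simp add: abs_mult)
  fix x y :: real assume "x \<in> {lo..}" "y \<in> {lo..}"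
  then show "dist (x powr q) (y powr q) \<le> q * lo powr (q - 1) * dist x y"
    using field_differentiable_bound[OF convex_real_interval(1) der bound] by (simp add: dist_norm)
qed (use q in simp)

lemma lipschitz_on_clipped_powr:
  fixes lo hi q :: real
  assumes lo: "0 < lo" and q: "0 < q" "q \<le> 1"
  shows "(q * lo powr (q - 1))-lipschitz_on UNIV (\<lambda>x. max lo (min hi x) powr q)"
proof -
  have "1-lipschitz_on UNIV (\<lambda>x::real. max lo (min hi x))"
    by (rule lipschitz_onI) (auto simp: dist_real_def max_def min_def)
  moreover have "(q * lo powr (q - 1))-lipschitz_on ((\<lambda>x. max lo (min hi x)) ` UNIV) (\<lambda>x. x powr q)"
    by (rule lipschitz_on_subset[OF lipschitz_on_powr[OF lo q]]) auto
  ultimately show ?thesis using lipschitz_on_compose2 by fastforce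
qed

lemma differentiable_of_powr_differentiable:
  fixes f :: "real \<Rightarrow> real"
  assumes S: "open S" "t \<in> S" and nonneg: "\<And>s. s \<in> S \<Longrightarrow> 0 \<le> f s" and pos: "0 < f t"
    and m: "m \<noteq> 0" and der: "((\<lambda>s. f s powr m) has_real_derivative w) (at t)"
  shows "f differentiable (at t)"
proof -
  have "((\<lambda>s. (f s powr m) powr (1/m)) has_real_derivative (1/m) * (f t powr m) powr (1/m - 1) * w) (at t)"
    using DERIV_fun_powr[OF der, of "1/m"] pos by simp
  then have "(f has_real_derivative (1/m) * (f t powr m) powr (1/m - 1) * w) (at t)"
    by (rule has_field_derivative_transform_within_open[OF _ S]) (use nonneg m in \<open>simp add: powr_powr\<close>)
  then show ?thesis by (auto simp: real_differentiable_def)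
qed

lemma continuous_on_extension_by_left_limit:
  fixes f :: "real \<Rightarrow> real"
  assumes cont: "continuous_on {..<L} f" and lim: "(f \<longlongrightarrow> p) (at_left L)"
  shows "continuous_on {..L} (\<lambda>t. if t < L then f t else p)" (is "continuous_on _ ?g")
  unfolding continuous_on_def
proof (intro ballI)
  fix x assume "x \<in> {..L}"
  then consider "x < L" | "x = L" by fastforce
  then show "(?g \<longlongrightarrow> ?g x) (at x within {..L})"
  proof cases
    case 1
    have "(f \<longlongrightarrow> f x) (at x)"
      using continuous_on_interior[OF cont] 1 by (simp add: interior_open continuous_at)
    moreover have "\<forall>\<^sub>F t in at x. f t = ?g t"
      using eventually_nhds_in_open[of "{..<L}" x] 1 by (auto simp: eventually_at_filter elim!: eventually_mono)
    ultimately have "(?g \<longlongrightarrow> ?g x) (at x)" using 1 by (simp add: tendsto_cong)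
    then show ?thesis by (rule tendsto_within_subset) simp
  next
    case 2
    have "\<forall>\<^sub>F t in at_left L. f t = ?g t" by (simp add: eventually_at_filter)
    then show ?thesis using lim 2 by (simp add: at_within_Iic_at_left tendsto_cong)
  qed
qed

lemma continuous_on_if_less_of_tendsto:
  fixes f g :: "real \<Rightarrow> real"
  assumes f: "continuous_on {..<L} f" and lim: "(f \<longlongrightarrow> g L) (at_left L)"
    and g: "continuous_on {L..b} g" and "L \<le> b"
  shows "continuous_on {..b} (\<lambda>t. if t < L then f t else g t)"
proof -
  have "continuous_on {..L} (\<lambda>t. if t < L then f t else g L)"
    by (rule continuous_on_extension_by_left_limit[OF f lim])
  then have "continuous_on {..L} (\<lambda>t. if t < L then f t else g t)"
    by (rule continuous_on_eq) auto
  moreover have "continuous_on {L..b} (\<lambda>t. if t < L then f t else g t)"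
    by (rule continuous_on_eq[OF g]) auto
  ultimately have "continuous_on ({..L} \<union> {L..b}) (\<lambda>t. if t < L then f t else g t)"
    by (intro continuous_on_closed_Un) auto
  moreover have "{..L} \<union> {L..b} = {..b}" using \<open>L \<le> b\<close> by auto
  ultimately show ?thesis by simp
qed

lemma integral_from_zero_has_real_derivative:
  fixes k :: "real \<Rightarrow> real" and L :: ereal
  assumes cont: "continuous_on {t. ereal t < L} k" and vanish: "\<And>s. s \<le> 0 \<Longrightarrow> k s = 0"
    and t: "ereal t < L"
  shows "((\<lambda>x. integral {0..x} k) has_real_derivative k t) (at t)"
proof -
  obtain T where T: "t < T" "ereal T < L" using ereal_dense2[OF t] by (cases L) auto
  define a where "a = min (t - 1) (-1)"
  have a: "a < t" "a < 0" unfolding a_def by auto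
  have k_cont: "continuous_on {a..T} k"
    using T by (intro continuous_on_subset[OF cont]) (auto intro: le_less_trans[of _ "ereal T"])
  have shift: "integral {a..x} k = integral {0..x} k" if "x \<in> {a<..<T}" for x
  proof (cases "x < 0")
    case True
    have "integral {a..x} k = integral {a..x} (\<lambda>_. 0)"
      by (rule integral_cong) (use True vanish in auto)
    then show ?thesis using True by simp
  next
    case False
    have "integral {a..x} k = integral {a..0} k + integral {0..x} k"
      using a False that
      by (intro Henstock_Kurzweil_Integration.integral_combine[symmetric] integrable_continuous_interval
          continuous_on_subset[OF k_cont]) auto
    also have "integral {a..0} k = integral {a..0} (\<lambda>_. 0)"
      by (rule integral_cong) (use vanish in auto)
    finally show ?thesis by simp
  qed
  have "((\<lambda>x. integral {a..x} k) has_real_derivative k t) (at t within {a..T})"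
    using a T by (intro integral_has_real_derivative[OF k_cont]) auto
  then have "((\<lambda>x. integral {a..x} k) has_real_derivative k t) (at t)"
    using at_within_interior[of t "{a..T}"] a T by simp
  then show ?thesis
    by (rule has_field_derivative_transform_within_open[of _ _ _ "{a<..<T}"]) (use a T shift in auto)
qed

lemma first_hitting_time:
  fixes f :: "real \<Rightarrow> real"
  assumes cont: "continuous_on {a..b} f" and "f a \<le> y" "y \<le> f b" "a \<le> b"
  shows "\<exists>t\<in>{a..b}. f t = y \<and> (\<forall>s\<in>{a..t}. f s \<le> y)"
proof -
  define S where "S = {x \<in> {a..b}. f x = y}"
  have "S \<noteq> {}" unfolding S_def using IVT'[of f a y b, OF assms(2-4) cont] by auto
  have "closed S"
    unfolding S_def by (rule continuous_closed_preimage_constant[OF cont]) simp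
  then have "compact S"
    unfolding compact_eq_bounded_closed S_def by (auto intro: bounded_subset[OF bounded_closed_interval])
  then obtain t where t: "t \<in> S" and first: "\<forall>x\<in>S. t \<le> x"
    using compact_attains_inf[OF _ \<open>S \<noteq> {}\<close>] by auto
  have "f s \<le> y" if s: "s \<in> {a..t}" for s
  proof (rule ccontr)
    assume above: "\<not> f s \<le> y"
    have "continuous_on {a..s} f" using s t unfolding S_def by (auto intro: continuous_on_subset[OF cont])
    then obtain x where x: "a \<le> x" "x \<le> s" "f x = y"
      using IVT'[of f a y s] assms(2) above s by auto
    then have "x \<in> S" using s t unfolding S_def by auto
    then have "s = x" using first x s by fastforce
    then show False using x above by simp
  qed
  then show ?thesis using t unfolding S_def by blast
qed

lemma tendsto_at_left_of_derivative_bounded_below: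
  fixes f f' :: "real \<Rightarrow> real"
  assumes der: "\<And>t. t < T \<Longrightarrow> (f has_real_derivative f' t) (at t)"
    and lower: "\<And>t. t < T \<Longrightarrow> - M \<le> f' t"
    and upper: "\<And>t. t < T \<Longrightarrow> f t \<le> K"
  shows "\<exists>l. (f \<longlongrightarrow> l) (at_left T)"
proof -
  define M' where "M' = max M 0"
  define g where "g t = f t + M' * t" for t
  have "g a \<le> g b" if "a \<le> b" "b < T" for a b
  proof (rule DERIV_nonneg_imp_nondecreasing[OF \<open>a \<le> b\<close>])
    fix x assume "a \<le> x" "x \<le> b"
    then have "x < T" using that by simp
    show "\<exists>y. (g has_real_derivative y) (at x) \<and> 0 \<le> y"
      using der[OF \<open>x < T\<close>] lower[OF \<open>x < T\<close>] unfolding g_def M'_def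
      by (intro exI[of _ "f' x + max M 0"]) (auto intro!: derivative_eq_intros)
  qed
  moreover have "g b \<le> K + M' * T" if "b < T" for b
    using upper[OF that] mult_left_mono[of b T M'] that unfolding g_def M'_def by simp
  ultimately have "(g \<longlongrightarrow> Sup (g ` {..<T})) (at_left T)"
    using Lim_left_bound[of UNIV T g "K + M' * T"] by simp
  then have "((\<lambda>t. g t - M' * t) \<longlongrightarrow> Sup (g ` {..<T}) - M' * T) (at_left T)"
    by (intro tendsto_intros)
  then show ?thesis by (auto simp: g_def)
qed

lemma exists_less_of_DERIV_le_neg:
  fixes G G' :: "real \<Rightarrow> real"
  assumes der: "\<And>t. a \<le> t \<Longrightarrow> (G has_real_derivative G' t) (at t)"
    and le: "\<And>t. a \<le> t \<Longrightarrow> G' t \<le> - \<kappa>" and \<kappa>: "0 < \<kappa>"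
  shows "\<exists>t\<ge>a. G t < B"
proof -
  define X where "X = (\<bar>G a\<bar> + \<bar>B\<bar>) / \<kappa> + 1"
  have "0 \<le> (\<bar>G a\<bar> + \<bar>B\<bar>) / \<kappa>" using \<kappa> by simp
  then have X: "a \<le> a + X" by (simp add: X_def)
  have "G (a + X) + \<kappa> * (a + X) \<le> G a + \<kappa> * a"
  proof (rule DERIV_nonpos_imp_nonincreasing[of a "a + X" "\<lambda>t. G t + \<kappa> * t", OF X])
    fix x assume "a \<le> x" "x \<le> a + X"
    then show "\<exists>y. ((\<lambda>t. G t + \<kappa> * t) has_real_derivative y) (at x) \<and> y \<le> 0"
      using der[of x] le[of x] by (intro exI conjI) (auto intro!: derivative_eq_intros)
  qed
  moreover have "\<kappa> * X = \<bar>G a\<bar> + \<bar>B\<bar> + \<kappa>" using \<kappa> by (simp add: X_def field_simps)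
  ultimately have "G (a + X) < B" using abs_ge_self[of "G a"] abs_ge_self[of B] \<kappa> by argo
  then show ?thesis using X by blast
qed

lemma DERIV_glue_integral:
  fixes U W :: "real \<Rightarrow> real"
  assumes t: "a < L" "L \<le> t" "t < b"
    and U_cont: "continuous_on {a..L} U" and W_cont: "continuous_on {a..b} W"
    and left: "\<And>x. a < x \<Longrightarrow> x < L \<Longrightarrow> (U has_real_derivative W x) (at x)"
    and right: "\<And>x. L \<le> x \<Longrightarrow> x \<le> b \<Longrightarrow> U x = U L + integral {L..x} W"
  shows "(U has_real_derivative W t) (at t)"
proof -
  have left_int: "U x = U a + integral {a..x} W" if x: "a \<le> x" "x \<le> L" for x
  proof -
    have "(W has_integral U x - U a) {a..x}"
      using x continuous_on_subset[OF U_cont] left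
      by (intro fundamental_theorem_of_calculus_interior)
        (auto simp: has_real_derivative_iff_has_vector_derivative[symmetric])
    then show ?thesis by (simp add: integral_unique)
  qed
  have rep: "U x = U a + integral {a..x} W" if x: "x \<in> {a<..<b}" for x
  proof (cases "x \<le> L")
    case False
    have "integral {a..L} W + integral {L..x} W = integral {a..x} W"
      using x t False by (intro Henstock_Kurzweil_Integration.integral_combine integrable_continuous_interval
          continuous_on_subset[OF W_cont]) auto
    then show ?thesis using left_int[of L] right[of x] x t False by simp
  next
    case True
    then show ?thesis using x by (intro left_int) auto
  qed
  have "((\<lambda>x. integral {a..x} W) has_real_derivative W t) (at t within {a..b})"
    using t by (intro integral_has_real_derivative[OF W_cont]) auto
  then have "((\<lambda>x. U a + integral {a..x} W) has_real_derivative W t) (at t)"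
    using t at_within_interior[of t "{a..b}"] by (auto intro!: derivative_eq_intros)
  then show ?thesis
    by (rule has_field_derivative_transform_within_open[of _ _ _ "{a<..<b}"]) (use t rep in auto)
qed

section \<open>Local solvability of the integrated equation\<close>

lemma clamped_integral_in_bcontfun:
  fixes v :: "real \<Rightarrow> real"
  assumes h: "0 < h" and v_cont: "continuous_on {a..a+h} v" and v_bound: "\<And>s. s \<in> {a..a+h} \<Longrightarrow> \<bar>v s\<bar> \<le> B"
  shows "(\<lambda>t. u\<^sub>0 + integral {a..max a (min (a+h) t)} v) \<in> bcontfun"
proof (rule bcontfun_normI)
  have "continuous_on {a..a+h} (\<lambda>x. integral {a..x} v)"
    by (rule indefinite_integral_continuous_1[OF integrable_continuous_interval[OF v_cont]])
  then have "continuous_on UNIV (\<lambda>t. integral {a..max a (min (a+h) t)} v)"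
    by (rule continuous_on_compose2) (use h in \<open>auto intro!: continuous_intros\<close>)
  then show "continuous_on UNIV (\<lambda>t. u\<^sub>0 + integral {a..max a (min (a+h) t)} v)"
    by (intro continuous_intros)
  fix t
  have "norm (integral {a..max a (min (a+h) t)} v) \<le> B * (max a (min (a+h) t) - a)"
    using h v_bound by (intro integral_bound continuous_on_subset[OF v_cont]) auto
  also have "\<dots> \<le> \<bar>B\<bar> * h" using h by (intro mult_mono) auto
  finally show "norm (u\<^sub>0 + integral {a..max a (min (a+h) t)} v) \<le> \<bar>u\<^sub>0\<bar> + \<bar>B\<bar> * h"
    by (simp add: order_trans[OF abs_triangle_ineq])
qed

lemma integral_equation_fixpoint:
  fixes V :: "(real \<Rightarrow> real) \<Rightarrow> real \<Rightarrow> real"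
  assumes h: "h > 0"
    and V_cont: "\<And>y. continuous_on UNIV y \<Longrightarrow> continuous_on {a..a+h} (V y)"
    and V_bound: "\<And>y s. continuous_on UNIV y \<Longrightarrow> s \<in> {a..a+h} \<Longrightarrow> \<bar>V y s\<bar> \<le> B"
    and V_lip: "\<And>y z M s. continuous_on UNIV y \<Longrightarrow> continuous_on UNIV z \<Longrightarrow>
                  (\<And>\<sigma>. \<bar>y \<sigma> - z \<sigma>\<bar> \<le> M) \<Longrightarrow> s \<in> {a..a+h} \<Longrightarrow> \<bar>V y s - V z s\<bar> \<le> \<Lambda> * M"
    and contraction: "h * \<Lambda> \<le> 1/2"
  shows "\<exists>y. continuous_on UNIV y \<and> (\<forall>t\<in>{a..a+h}.
    y t = u\<^sub>0 + integral {a..t} (V y) \<and> \<bar>y t - u\<^sub>0\<bar> \<le> B * (t - a))"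
proof -
  have \<Lambda>: "0 \<le> \<Lambda>" using V_lip[of "\<lambda>_. 0" "\<lambda>_. 0" 1 a] h by simp
  define \<tau> where "\<tau> t = max a (min (a+h) t)" for t
  have \<tau>: "\<tau> t \<in> {a..a+h}" for t unfolding \<tau>_def using h by auto
  define P where "P y t = u\<^sub>0 + integral {a..\<tau> t} (V y)" for y t
  define \<Phi> where "\<Phi> f = Bcontfun (P (apply_bcontfun f))" for f :: "real \<Rightarrow>\<^sub>C real"
  have \<Phi>: "apply_bcontfun (\<Phi> f) = P (apply_bcontfun f)" for f
    unfolding \<Phi>_def P_def \<tau>_def
    by (rule Bcontfun_inverse[OF clamped_integral_in_bcontfun[OF h V_cont V_bound]]) simp_all
  have "dist (\<Phi> f1) (\<Phi> f2) \<le> 1/2 * dist f1 f2" for f1 f2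
  proof (rule dist_bound)
    fix t
    have M: "\<bar>f1 \<sigma> - f2 \<sigma>\<bar> \<le> dist f1 f2" for \<sigma>
      using dist_bounded[of f1 \<sigma> f2] by (simp add: dist_real_def)
    have "dist (\<Phi> f1 t) (\<Phi> f2 t) = \<bar>integral {a..\<tau> t} (\<lambda>s. V f1 s - V f2 s)\<bar>"
      using \<tau>[of t] unfolding \<Phi> P_def dist_real_def
      by (subst integral_diff) (auto intro!: integrable_continuous_interval continuous_on_subset[OF V_cont])
    also have "\<dots> \<le> \<Lambda> * dist f1 f2 * (\<tau> t - a)"
      using \<tau>[of t] V_lip[OF _ _ M]
      by (intro integral_bound[where 'a=real, unfolded real_norm_def] continuous_intros
          continuous_on_subset[OF V_cont]) auto
    also have "\<dots> \<le> \<Lambda> * dist f1 f2 * h" using \<tau>[of t] \<Lambda> by (intro mult_left_mono) auto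
    also have "\<dots> \<le> 1/2 * dist f1 f2" using mult_right_mono[OF contraction zero_le_dist[of f1 f2]] by (simp add: mult_ac)
    finally show "dist (\<Phi> f1 t) (\<Phi> f2 t) \<le> 1/2 * dist f1 f2" .
  qed
  then obtain f where "\<Phi> f = f" using banach_fix_type[of "1/2" \<Phi>] by auto
  then have f: "apply_bcontfun f t = P (apply_bcontfun f) t" for t using \<Phi> by metis
  have "apply_bcontfun f t = u\<^sub>0 + integral {a..t} (V (apply_bcontfun f)) \<and>
      \<bar>apply_bcontfun f t - u\<^sub>0\<bar> \<le> B * (t - a)" if t: "t \<in> {a..a+h}" for t
  proof
    show eq: "apply_bcontfun f t = u\<^sub>0 + integral {a..t} (V (apply_bcontfun f))"
      using f[of t] t unfolding P_def \<tau>_def by simp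
    have "\<bar>integral {a..t} (V (apply_bcontfun f))\<bar> \<le> B * (t - a)"
      using t V_bound continuous_on_subset[OF V_cont]
      by (intro integral_bound[where 'a=real, unfolded real_norm_def]) auto
    then show "\<bar>apply_bcontfun f t - u\<^sub>0\<bar> \<le> B * (t - a)" by (simp add: eq)
  qed
  then show ?thesis by (intro exI[of _ "apply_bcontfun f"] conjI continuous_on_apply_bcontfun) blast
qed

lemma iterated_integral_operator_lipschitz:
  fixes H F g y z :: "real \<Rightarrow> real"
  assumes c: "0 \<le> c" and D: "0 < D"
    and H_lip: "LH-lipschitz_on UNIV H" and F_lip: "LF-lipschitz_on UNIV F"
    and y: "continuous_on UNIV y" and z: "continuous_on UNIV z" and g: "continuous_on {a..s} g"
    and M: "\<And>\<sigma>. \<bar>y \<sigma> - z \<sigma>\<bar> \<le> M" and s: "a \<le> s" "s \<le> a + h"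
  shows "\<bar>(c * H (y s) + C + integral {a..s} (\<lambda>\<sigma>. F (y \<sigma>) - g \<sigma>)) / D
    - (c * H (z s) + C + integral {a..s} (\<lambda>\<sigma>. F (z \<sigma>) - g \<sigma>)) / D\<bar> \<le> (c * LH + h * LF) / D * M"
proof -
  have LH: "0 \<le> LH" and LF: "0 \<le> LF" and "0 \<le> M"
    using H_lip F_lip order_trans[OF abs_ge_zero M] by (auto dest: lipschitz_on_nonneg)
  have Fy: "continuous_on {a..s} (\<lambda>\<sigma>. F (y \<sigma>))" and Fz: "continuous_on {a..s} (\<lambda>\<sigma>. F (z \<sigma>))"
    using continuous_on_compose2[OF lipschitz_on_continuous_on[OF F_lip]] y z
    by (auto intro: continuous_on_subset)
  have F_M: "\<bar>F (y \<sigma>) - F (z \<sigma>)\<bar> \<le> LF * M" for \<sigma>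
    using lipschitz_onD[OF F_lip UNIV_I UNIV_I, of "y \<sigma>" "z \<sigma>", unfolded dist_real_def]
      mult_left_mono[OF M[of \<sigma>] LF] by linarith
  have H_M: "\<bar>c * H (y s) - c * H (z s)\<bar> \<le> c * (LH * M)"
    using lipschitz_onD[OF H_lip UNIV_I UNIV_I, of "y s" "z s", unfolded dist_real_def]
      mult_left_mono[OF M[of s] LH] mult_left_mono[of "\<bar>H (y s) - H (z s)\<bar>" "LH * M" c] c
    by (simp add: abs_mult right_diff_distrib[symmetric])
  let ?Iy = "integral {a..s} (\<lambda>\<sigma>. F (y \<sigma>) - g \<sigma>)" and ?Iz = "integral {a..s} (\<lambda>\<sigma>. F (z \<sigma>) - g \<sigma>)"
  have "\<bar>?Iy - ?Iz\<bar> = \<bar>integral {a..s} (\<lambda>\<sigma>. F (y \<sigma>) - F (z \<sigma>))\<bar>"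
    using Fy Fz g by (subst integral_diff[symmetric]) (auto intro!: integrable_continuous_interval continuous_intros)
  also have "\<dots> \<le> LF * M * (s - a)"
    using s F_M Fy Fz by (intro integral_bound[where 'a=real, unfolded real_norm_def] continuous_intros) auto
  also have "\<dots> \<le> LF * M * h" using s LF \<open>0 \<le> M\<close> by (intro mult_left_mono) auto
  finally have I: "\<bar>?Iy - ?Iz\<bar> \<le> h * LF * M" by (simp add: mult_ac)
  have "(c * H (y s) + C + ?Iy) / D - (c * H (z s) + C + ?Iz) / D
      = ((c * H (y s) - c * H (z s)) + (?Iy - ?Iz)) / D"
    using D by (simp add: field_simps)
  also have "\<bar>\<dots>\<bar> \<le> (c * (LH * M) + h * LF * M) / D"
    using H_M I D abs_triangle_ineq[of "c * H (y s) - c * H (z s)" "?Iy - ?Iz"]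
    by (simp add: divide_right_mono)
  finally show ?thesis by (simp add: field_simps)
qed

lemma iterated_integral_equation_solvable:
  fixes H F g :: "real \<Rightarrow> real"
  assumes D: "D > 0" and c: "c \<ge> 0" and h: "h > 0"
    and H_lip: "LH-lipschitz_on UNIV H" and H_bound: "\<And>x. \<bar>H x\<bar> \<le> RH"
    and F_lip: "LF-lipschitz_on UNIV F" and F_bound: "\<And>x. \<bar>F x\<bar> \<le> RF"
    and g_cont: "continuous_on {a..a+h} g" and g_bound: "\<And>s. s \<in> {a..a+h} \<Longrightarrow> \<bar>g s\<bar> \<le> Rg"
    and small: "h * ((c * LH + h * LF) / D) \<le> 1/2"
  shows "\<exists>y. continuous_on UNIV y \<and> (\<forall>t\<in>{a..a+h}.
      y t = u\<^sub>0 + integral {a..t} (\<lambda>s. (c * H (y s) + C\<^sub>0 + integral {a..s} (\<lambda>\<sigma>. F (y \<sigma>) - g \<sigma>)) / D) \<and>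
      \<bar>y t - u\<^sub>0\<bar> \<le> (t - a) * ((c * RH + \<bar>C\<^sub>0\<bar> + h * (RF + Rg)) / D))"
proof -
  define V where "V y s = (c * H (y s) + C\<^sub>0 + integral {a..s} (\<lambda>\<sigma>. F (y \<sigma>) - g \<sigma>)) / D" for y s
  define B where "B = (c * RH + \<bar>C\<^sub>0\<bar> + h * (RF + Rg)) / D"
  have H_cont: "continuous_on UNIV H" and F_cont: "continuous_on UNIV F"
    using lipschitz_on_continuous_on[OF H_lip] lipschitz_on_continuous_on[OF F_lip] by auto
  have comp_cont: "continuous_on UNIV (\<lambda>x. G (y x))"
    if "continuous_on UNIV G" "continuous_on UNIV y" for G y :: "real \<Rightarrow> real"
    by (rule continuous_on_compose2[OF that]) auto
  have inner_cont: "continuous_on {a..a+h} (\<lambda>\<sigma>. F (y \<sigma>) - g \<sigma>)" if "continuous_on UNIV y" for y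
    using continuous_on_subset[OF comp_cont[OF F_cont that]] g_cont by (intro continuous_intros) auto
  have V_cont: "continuous_on {a..a+h} (V y)" if y: "continuous_on UNIV y" for y
    unfolding V_def using D continuous_on_subset[OF comp_cont[OF H_cont y]]
      indefinite_integral_continuous_1[OF integrable_continuous_interval[OF inner_cont[OF y]]]
    by (intro continuous_intros) auto
  have V_bound: "\<bar>V y s\<bar> \<le> B" if y: "continuous_on UNIV y" and s: "s \<in> {a..a+h}" for y s
  proof -
    have pointwise: "\<bar>F (y \<sigma>) - g \<sigma>\<bar> \<le> RF + Rg" if "\<sigma> \<in> {a..a+h}" for \<sigma>
      using abs_triangle_ineq4[of "F (y \<sigma>)" "g \<sigma>"] F_bound[of "y \<sigma>"] g_bound[OF that] by linarith
    have "\<bar>integral {a..s} (\<lambda>\<sigma>. F (y \<sigma>) - g \<sigma>)\<bar> \<le> (RF + Rg) * (s - a)"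
      using s pointwise by (intro integral_bound[where 'a=real, unfolded real_norm_def]
          continuous_on_subset[OF inner_cont[OF y]]) auto
    also have "\<dots> \<le> h * (RF + Rg)"
    proof -
      have "a \<in> {a..a+h}" using h by simp
      then have "0 \<le> RF + Rg"
        using F_bound[of 0] abs_ge_zero[of "F 0"] g_bound[of a] abs_ge_zero[of "g a"] by linarith
      then show ?thesis using s mult_right_mono[of "s - a" h "RF + Rg"] by (simp add: mult.commute)
    qed
    finally have I: "\<bar>integral {a..s} (\<lambda>\<sigma>. F (y \<sigma>) - g \<sigma>)\<bar> \<le> h * (RF + Rg)" .
    have "\<bar>c * H (y s)\<bar> \<le> c * RH"
      using H_bound[of "y s"] c mult_left_mono[of "\<bar>H (y s)\<bar>" RH c] by (simp add: abs_mult)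
    then have "\<bar>c * H (y s) + C\<^sub>0 + integral {a..s} (\<lambda>\<sigma>. F (y \<sigma>) - g \<sigma>)\<bar> \<le> c * RH + \<bar>C\<^sub>0\<bar> + h * (RF + Rg)"
      using I abs_triangle_ineq[of "c * H (y s) + C\<^sub>0" "integral {a..s} (\<lambda>\<sigma>. F (y \<sigma>) - g \<sigma>)"]
        abs_triangle_ineq[of "c * H (y s)" C\<^sub>0] by linarith
    then show ?thesis unfolding V_def B_def using D by (simp add: divide_right_mono)
  qed
  have V_lip: "\<bar>V y s - V z s\<bar> \<le> ((c * LH + h * LF) / D) * M"
    if "continuous_on UNIV y" "continuous_on UNIV z" "\<And>\<sigma>. \<bar>y \<sigma> - z \<sigma>\<bar> \<le> M" "s \<in> {a..a+h}"
    for y z M s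
    unfolding V_def using that c D H_lip F_lip continuous_on_subset[OF g_cont, of "{a..s}"]
    by (intro iterated_integral_operator_lipschitz) auto
  have "V y = (\<lambda>s. (c * H (y s) + C\<^sub>0 + integral {a..s} (\<lambda>\<sigma>. F (y \<sigma>) - g \<sigma>)) / D)" for y
    by (rule ext) (simp only: V_def)
  then show ?thesis
    using integral_equation_fixpoint[where V = V and B = B and \<Lambda> = "(c * LH + h * LF) / D" and a = a,
        OF h V_cont V_bound V_lip small, where u\<^sub>0 = u\<^sub>0]
    unfolding B_def by (simp only: mult.commute)
qed

lemma lipschitz_on_compose_bounded:
  fixes H d :: "real \<Rightarrow> real"
  assumes H: "LH-lipschitz_on UNIV H" and H_range: "\<And>x. 0 \<le> H x \<and> H x \<le> \<rho>"
    and d: "K-lipschitz_on {0..\<rho>} d"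
  shows "(K * LH)-lipschitz_on UNIV (\<lambda>x. d (H x))" and "\<bar>d (H x)\<bar> \<le> \<bar>d 0\<bar> + K * \<rho>"
proof -
  show "(K * LH)-lipschitz_on UNIV (\<lambda>x. d (H x))"
    using lipschitz_on_compose2[OF H lipschitz_on_subset[OF d]] H_range by fastforce
  have "\<bar>d (H x) - d 0\<bar> \<le> K * \<bar>H x - 0\<bar>"
    using lipschitz_onD[OF d, of "H x" 0] H_range[of x] by (simp add: dist_real_def)
  also have "\<dots> \<le> K * \<rho>" using H_range[of x] lipschitz_on_nonneg[OF d] by (intro mult_left_mono) auto
  finally show "\<bar>d (H x)\<bar> \<le> \<bar>d 0\<bar> + K * \<rho>" by linarith
qed

lemma exists_small_step:
  fixes \<tau> lo V \<Lambda> :: real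
  assumes "0 < \<tau>" "0 < lo" "0 \<le> V" "0 \<le> \<Lambda>"
  shows "\<exists>h. 0 < h \<and> h \<le> \<tau> \<and> h * V < lo \<and> h * \<Lambda> \<le> 1/2"
proof (intro exI conjI)
  define h where "h = min \<tau> (min (lo / (V + 1)) (1 / (2 * \<Lambda> + 1)))"
  show "0 < h" "h \<le> \<tau>" unfolding h_def using assms by auto
  have "h * V \<le> lo / (V + 1) * V" unfolding h_def using assms by (intro mult_right_mono) auto
  also have "\<dots> < lo" using assms by (simp add: divide_simps)
  finally show "h * V < lo" .
  have "h * \<Lambda> \<le> 1 / (2 * \<Lambda> + 1) * \<Lambda>" unfolding h_def using assms by (intro mult_right_mono) auto
  also have "\<dots> \<le> 1/2" using assms by (simp add: divide_simps)
  finally show "h * \<Lambda> \<le> 1/2" .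
qed

lemma iterated_integral_equation_positive_solution:
  fixes d g :: "real \<Rightarrow> real"
  assumes D: "D > 0" and c: "c \<ge> 0" and q: "0 < q" "q \<le> 1" and u: "0 < u\<^sub>0" and \<tau>: "0 < \<tau>"
    and d_lip: "\<And>R. \<exists>K. K-lipschitz_on {0..R} d"
    and g_cont: "continuous_on {a..a+\<tau>} g" and g_bound: "\<And>s. s \<in> {a..a+\<tau>} \<Longrightarrow> \<bar>g s\<bar> \<le> B"
  shows "\<exists>h y. 0 < h \<and> h \<le> \<tau> \<and> continuous_on UNIV y \<and> (\<forall>t\<in>{a..a+h}. 0 < y t \<and>
      y t = u\<^sub>0 + integral {a..t} (\<lambda>s. (c * y s powr q + C\<^sub>0 + integral {a..s} (\<lambda>\<sigma>. d (y \<sigma> powr q) - g \<sigma>)) / D))"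
proof -
  \<comment> \<open>Clipped to \<open>[u\<^sub>0/2, 2 u\<^sub>0]\<close>, the nonlinearity becomes globally Lipschitz;
    for small \<open>h\<close> the solution stays in that range, where the clipping is inactive.\<close>
  define lo where "lo = u\<^sub>0 / 2"
  define hi where "hi = 2 * u\<^sub>0"
  define H where "H x = max lo (min hi x) powr q" for x
  define \<rho> where "\<rho> = hi powr q"
  define LH where "LH = q * lo powr (q - 1)"
  have lo: "0 < lo" "lo \<le> hi" using u by (auto simp: lo_def hi_def)
  have H_lip: "LH-lipschitz_on UNIV H"
    unfolding H_def LH_def by (rule lipschitz_on_clipped_powr[OF lo(1) q])
  have H_range: "0 \<le> H x \<and> H x \<le> \<rho>" for x
    unfolding H_def \<rho>_def using lo q by (auto intro!: powr_mono2)
  have H_bound: "\<bar>H x\<bar> \<le> \<rho>" for x using H_range[of x] by simp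
  obtain K where K: "K-lipschitz_on {0..\<rho>} d" using d_lip by blast
  note F = lipschitz_on_compose_bounded[OF H_lip H_range K]
  define RF where "RF = \<bar>d 0\<bar> + K * \<rho>"
  have K0: "0 \<le> K" and LH0: "0 \<le> LH" using lipschitz_on_nonneg K H_lip by auto
  have "a \<in> {a..a+\<tau>}" using \<tau> by simp
  then have RF_B: "0 \<le> RF + B"
    using g_bound[of a] abs_ge_zero[of "g a"] abs_ge_zero[of "d 0"] K0 H_range[of 0] unfolding RF_def
    by (smt (verit) mult_nonneg_nonneg)
  define Vb where "Vb = (c * \<rho> + \<bar>C\<^sub>0\<bar> + \<tau> * (RF + B)) / D"
  define \<Lambda> where "\<Lambda> = (c * LH + \<tau> * (K * LH)) / D"
  have "0 \<le> Vb" unfolding Vb_def using D c \<tau> RF_B H_range[of 0] by (auto intro!: divide_nonneg_pos)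
  moreover have "0 \<le> \<Lambda>" unfolding \<Lambda>_def using D c \<tau> LH0 K0 by (auto intro!: divide_nonneg_pos)
  ultimately obtain h where h: "0 < h" "h \<le> \<tau>" "h * Vb < lo" "h * \<Lambda> \<le> 1/2"
    using exists_small_step[OF \<tau> lo(1)] by blast
  have small: "h * ((c * LH + h * (K * LH)) / D) \<le> 1/2"
  proof -
    have "(c * LH + h * (K * LH)) / D \<le> \<Lambda>"
      unfolding \<Lambda>_def using h D K0 LH0 by (intro divide_right_mono add_left_mono mult_right_mono) auto
    then have "h * ((c * LH + h * (K * LH)) / D) \<le> h * \<Lambda>" using h by (intro mult_left_mono) auto
    then show ?thesis using h(4) by linarith
  qed
  have g_cont': "continuous_on {a..a+h} g" by (rule continuous_on_subset[OF g_cont]) (use h in auto)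
  have g_bound': "\<bar>g s\<bar> \<le> B" if "s \<in> {a..a+h}" for s using g_bound that h by auto
  obtain y where y: "continuous_on UNIV y" and y_eq: "\<forall>t\<in>{a..a+h}.
      y t = u\<^sub>0 + integral {a..t} (\<lambda>s. (c * H (y s) + C\<^sub>0 + integral {a..s} (\<lambda>\<sigma>. d (H (y \<sigma>)) - g \<sigma>)) / D) \<and>
      \<bar>y t - u\<^sub>0\<bar> \<le> (t - a) * ((c * \<rho> + \<bar>C\<^sub>0\<bar> + h * (RF + B)) / D)"
    using iterated_integral_equation_solvable[OF D c h(1) H_lip H_bound F(1) F(2)[folded RF_def] g_cont' g_bound' small,
        where u\<^sub>0 = u\<^sub>0 and C\<^sub>0 = C\<^sub>0]
    by (elim meta_impE exE conjE) (auto intro: that)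
  have range: "lo < y t \<and> y t < hi" if t: "t \<in> {a..a+h}" for t
  proof -
    have "(c * \<rho> + \<bar>C\<^sub>0\<bar> + h * (RF + B)) / D \<le> Vb"
      unfolding Vb_def using h D RF_B by (intro divide_right_mono add_left_mono mult_right_mono) auto
    then have "\<bar>y t - u\<^sub>0\<bar> \<le> (t - a) * Vb"
      using y_eq t by (meson atLeastAtMost_iff diff_ge_0_iff_ge mult_left_mono order_trans)
    also have "\<dots> \<le> h * Vb" using t \<open>0 \<le> Vb\<close> by (intro mult_right_mono) auto
    also have "\<dots> < lo" by (rule h(3))
    finally have "\<bar>y t - u\<^sub>0\<bar> < lo" .
    then have "- lo < y t - u\<^sub>0" "y t - u\<^sub>0 < lo" by (simp_all add: abs_less_iff)
    then show ?thesis using u unfolding lo_def hi_def by linarith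
  qed
  have H_y: "H (y t) = y t powr q" if "t \<in> {a..a+h}" for t
    using range[OF that] unfolding H_def by simp
  show ?thesis
  proof (intro exI conjI ballI)
    fix t assume t: "t \<in> {a..a+h}"
    show "0 < y t" using range[OF t] lo by linarith
    have "integral {a..t} (\<lambda>s. (c * H (y s) + C\<^sub>0 + integral {a..s} (\<lambda>\<sigma>. d (H (y \<sigma>)) - g \<sigma>)) / D)
        = integral {a..t} (\<lambda>s. (c * y s powr q + C\<^sub>0 + integral {a..s} (\<lambda>\<sigma>. d (y \<sigma> powr q) - g \<sigma>)) / D)"
    proof (rule integral_cong)
      fix s assume s: "s \<in> {a..t}"
      have "integral {a..s} (\<lambda>\<sigma>. d (H (y \<sigma>)) - g \<sigma>) = integral {a..s} (\<lambda>\<sigma>. d (y \<sigma> powr q) - g \<sigma>)"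
        by (rule integral_cong) (use s t H_y in auto)
      then show "(c * H (y s) + C\<^sub>0 + integral {a..s} (\<lambda>\<sigma>. d (H (y \<sigma>)) - g \<sigma>)) / D
          = (c * y s powr q + C\<^sub>0 + integral {a..s} (\<lambda>\<sigma>. d (y \<sigma> powr q) - g \<sigma>)) / D"
        using s t H_y[of s] by simp
    qed
    then show "y t = u\<^sub>0 + integral {a..t}
        (\<lambda>s. (c * y s powr q + C\<^sub>0 + integral {a..s} (\<lambda>\<sigma>. d (y \<sigma> powr q) - g \<sigma>)) / D)"
      using y_eq t by simp
  qed (use h y in auto)
qed

section \<open>Solutions of the delayed equation\<close>

locale delayed_wave =
  fixes m D r c :: real and b d :: "real \<Rightarrow> real"
  assumes m_gt_1: "m > 1" and D_pos: "D > 0" and r_pos: "r > 0" and c_pos: "c > 0"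
    and b_cont: "continuous_on {0..} b" and d_cont: "continuous_on {0..} d"
    and b_0: "b 0 = 0" and d_0: "d 0 = 0"
begin

abbreviation solution :: "(real \<Rightarrow> real) \<Rightarrow> ereal \<Rightarrow> bool" where
  "solution \<phi> L \<equiv> wave_sol m D r b d c \<phi> L"

definition net_death :: "(real \<Rightarrow> real) \<Rightarrow> real \<Rightarrow> real" where
  "net_death \<phi> s = d (\<phi> s) - b (\<phi> (s - c * r))"

lemma delay_pos: "c * r > 0"
  using c_pos r_pos by simp

lemma net_death_vanishes:
  assumes "\<And>t. t \<le> 0 \<Longrightarrow> \<phi> t = 0" "s \<le> 0"
  shows "net_death \<phi> s = 0"
  using assms delay_pos b_0 d_0 by (simp add: net_death_def)

lemma continuous_on_net_death:
  assumes down: "\<And>s t. t \<in> S \<Longrightarrow> s \<le> t \<Longrightarrow> s \<in> S"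
    and nonneg: "\<And>t. t \<in> S \<Longrightarrow> 0 \<le> \<phi> t" and cont: "continuous_on S \<phi>"
  shows "continuous_on S (net_death \<phi>)"
proof -
  have shift: "(\<lambda>s. s - c * r) ` S \<subseteq> S" using down delay_pos by force
  have "continuous_on S (\<lambda>s. \<phi> (s - c * r))"
    by (rule continuous_on_compose2[OF cont _ shift]) (intro continuous_intros)
  then show ?thesis
    unfolding net_death_def using nonneg shift
    by (intro continuous_intros continuous_on_compose2[OF d_cont cont]
        continuous_on_compose2[OF b_cont]) auto
qed

lemma
  assumes "solution \<phi> L"
  shows solution_L_pos: "0 < L"
    and solution_vanishes: "t \<le> 0 \<Longrightarrow> \<phi> t = 0"
    and solution_pos: "0 < t \<Longrightarrow> ereal t < L \<Longrightarrow> 0 < \<phi> t"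
    and solution_nonneg: "ereal t < L \<Longrightarrow> 0 \<le> \<phi> t"
    and solution_cont: "continuous_on {t. ereal t < L} \<phi>"
    and solution_powr_DERIV:
      "ereal t < L \<Longrightarrow> ((\<lambda>s. \<phi> s powr m) has_real_derivative deriv (\<lambda>s. \<phi> s powr m) t) (at t)"
    and solution_deriv_powr_cont: "continuous_on {t. ereal t < L} (deriv (\<lambda>s. \<phi> s powr m))"
    and solution_deriv_powr_0: "deriv (\<lambda>s. \<phi> s powr m) 0 = 0"
    and solution_DERIV: "0 < t \<Longrightarrow> ereal t < L \<Longrightarrow> (\<phi> has_real_derivative deriv \<phi> t) (at t)"
    and solution_deriv_powr_DERIV: "0 < t \<Longrightarrow> ereal t < L \<Longrightarrow>
      (deriv (\<lambda>s. \<phi> s powr m) has_real_derivative deriv (deriv (\<lambda>s. \<phi> s powr m)) t) (at t)"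
    and solution_equation: "0 < t \<Longrightarrow> ereal t < L \<Longrightarrow>
      c * deriv \<phi> t = D * deriv (deriv (\<lambda>s. \<phi> s powr m)) t - net_death \<phi> t"
  using assms unfolding wave_sol_def net_death_def
  by (auto simp: DERIV_deriv_iff_real_differentiable) (metis less_le_not_le nle_le)

lemma integral_net_death_has_derivative:
  assumes vanish: "\<And>t. t \<le> 0 \<Longrightarrow> \<phi> t = 0" and nonneg: "\<And>t. ereal t < L \<Longrightarrow> 0 \<le> \<phi> t"
    and cont: "continuous_on {t. ereal t < L} \<phi>" and t: "ereal t < L"
  shows "((\<lambda>x. integral {0..x} (net_death \<phi>)) has_real_derivative net_death \<phi> t) (at t)"
proof (rule integral_from_zero_has_real_derivative[OF _ _ t])
  show "continuous_on {t. ereal t < L} (net_death \<phi>)"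
    by (rule continuous_on_net_death[OF _ _ cont]) (auto intro: ereal_le_less_trans nonneg)
qed (use net_death_vanishes vanish in auto)

lemma solution_integral_net_death_DERIV:
  assumes sol: "solution \<phi> L" and t: "ereal t < L"
  shows "((\<lambda>x. integral {0..x} (net_death \<phi>)) has_real_derivative net_death \<phi> t) (at t)"
  using integral_net_death_has_derivative[OF solution_vanishes[OF sol] solution_nonneg[OF sol]
      solution_cont[OF sol] t] .

lemma solution_deriv_powr_eq:
  assumes sol: "solution \<phi> L" and t: "ereal t < L"
  shows "D * deriv (\<lambda>s. \<phi> s powr m) t = c * \<phi> t + integral {0..t} (net_death \<phi>)"
proof -
  define w where "w = deriv (\<lambda>s. \<phi> s powr m)"
  show ?thesis
  proof (cases "t \<le> 0")
    case True
    then have "w t = 0"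
    proof (cases "t = 0")
      case False
      have "((\<lambda>s. \<phi> s powr m) has_real_derivative 0) (at t)"
        by (rule has_field_derivative_transform_within_open[of "\<lambda>_. 0" _ _ "{..<0}"])
          (use True False solution_vanishes[OF sol] in auto)
      then show ?thesis unfolding w_def by (rule DERIV_imp_deriv)
    qed (use solution_deriv_powr_0[OF sol] w_def in simp)
    moreover have "integral {0..t} (net_death \<phi>) = 0" using True by (cases "t = 0") auto
    ultimately show ?thesis using True solution_vanishes[OF sol, of t] unfolding w_def by simp
  next
    case False
    define G where "G s = D * w s - c * \<phi> s - integral {0..s} (net_death \<phi>)" for s
    have sub: "{0..t} \<subseteq> {t. ereal t < L}" using t by (auto intro: ereal_le_less_trans)
    have "continuous_on {0..t} (\<lambda>x. integral {0..x} (net_death \<phi>))"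
      using sub solution_integral_net_death_DERIV[OF sol]
      by (intro continuous_at_imp_continuous_on) (auto intro: DERIV_continuous)
    then have G_cont: "continuous_on {0..t} G"
      unfolding G_def w_def
      using continuous_on_subset[OF solution_cont[OF sol] sub]
        continuous_on_subset[OF solution_deriv_powr_cont[OF sol] sub]
      by (intro continuous_intros)
    have G_der: "(G has_real_derivative 0) (at s)" if "0 < s" "s < t" for s
    proof -
      have s: "ereal s < L" using ereal_le_less_trans[of s t L] that t by simp
      have "(G has_real_derivative D * deriv w s - c * deriv \<phi> s - net_death \<phi> s) (at s)"
        unfolding G_def w_def
        by (intro DERIV_diff DERIV_cmult solution_deriv_powr_DERIV[OF sol \<open>0 < s\<close> s]
            solution_DERIV[OF sol \<open>0 < s\<close> s] solution_integral_net_death_DERIV[OF sol s])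
      then show ?thesis using solution_equation[OF sol \<open>0 < s\<close> s] unfolding w_def by simp
    qed
    have "G t = G 0" using False by (intro DERIV_isconst_end[OF _ G_cont G_der]) auto
    then show ?thesis
      using solution_deriv_powr_0[OF sol] solution_vanishes[OF sol, of 0] unfolding G_def w_def by simp
  qed
qed


lemma solutionI:
  assumes L: "0 < L" and vanish: "\<And>t. t \<le> 0 \<Longrightarrow> \<psi> t = 0"
    and pos: "\<And>t. 0 < t \<Longrightarrow> ereal t < L \<Longrightarrow> 0 < \<psi> t"
    and cont: "continuous_on {t. ereal t < L} \<psi>"
    and der: "\<And>t. ereal t < L \<Longrightarrow>
      ((\<lambda>s. \<psi> s powr m) has_real_derivative (c * \<psi> t + integral {0..t} (net_death \<psi>)) / D) (at t)"
  shows "solution \<psi> L"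
proof -
  define J where "J t = integral {0..t} (net_death \<psi>)" for t
  define W where "W t = (c * \<psi> t + J t) / D" for t
  have nonneg: "0 \<le> \<psi> t" if "ereal t < L" for t
    using vanish pos that by (cases "t \<le> 0") (auto intro: less_imp_le)
  have J_der: "(J has_real_derivative net_death \<psi> t) (at t)" if "ereal t < L" for t
    unfolding J_def by (rule integral_net_death_has_derivative[OF vanish nonneg cont that])
  have deriv_eq: "deriv (\<lambda>s. \<psi> s powr m) t = W t" if "ereal t < L" for t
    using der[OF that] unfolding W_def J_def by (rule DERIV_imp_deriv)
  have "continuous_on {t. ereal t < L} J"
    using J_der by (intro continuous_at_imp_continuous_on) (auto intro: DERIV_continuous)
  then have W_cont: "continuous_on {t. ereal t < L} W"
    unfolding W_def using cont D_pos by (intro continuous_intros) auto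
  have equation: "\<psi> differentiable (at t) \<and> deriv (\<lambda>s. \<psi> s powr m) differentiable (at t) \<and>
      c * deriv \<psi> t = D * deriv (deriv (\<lambda>s. \<psi> s powr m)) t - d (\<psi> t) + b (\<psi> (t - c * r))"
    if t: "0 < t" "ereal t < L" for t
  proof -
    have "\<psi> differentiable (at t)"
      by (rule differentiable_of_powr_differentiable[OF open_Collect_ereal_less _ _ pos[OF t] _ der[OF t(2)]])
        (use t nonneg m_gt_1 in auto)
    then have \<psi>_der: "(\<psi> has_real_derivative deriv \<psi> t) (at t)"
      by (simp add: DERIV_deriv_iff_real_differentiable)
    have "(W has_real_derivative (c * deriv \<psi> t + net_death \<psi> t) / D) (at t)"
      unfolding W_def using \<psi>_der J_der[OF t(2)] D_pos by (auto intro!: derivative_eq_intros)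
    then have w_der: "(deriv (\<lambda>s. \<psi> s powr m) has_real_derivative (c * deriv \<psi> t + net_death \<psi> t) / D) (at t)"
      by (rule has_field_derivative_transform_within_open[OF _ open_Collect_ereal_less])
        (use t deriv_eq in auto)
    show ?thesis
      using \<psi>_der w_der DERIV_imp_deriv[OF w_der] D_pos
      by (auto simp: real_differentiable_def net_death_def field_simps)
  qed
  show ?thesis unfolding wave_sol_def
  proof (intro conjI allI impI)
    show "continuous_on {t. ereal t < L} (deriv (\<lambda>s. \<psi> s powr m))"
      by (rule continuous_on_eq[OF W_cont]) (use deriv_eq in auto)
    show "deriv (\<lambda>s. \<psi> s powr m) 0 = 0"
      using deriv_eq[of 0] L vanish[of 0] by (simp add: W_def J_def zero_ereal_def)
  qed (use L vanish pos cont der equation in \<open>auto simp: real_differentiable_def\<close>)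
qed

lemma solution_integral_DERIV:
  assumes sol: "solution \<phi> L" and t: "ereal t < L"
  shows "((\<lambda>x. integral {0..x} \<phi>) has_real_derivative \<phi> t) (at t)"
  using integral_from_zero_has_real_derivative[OF solution_cont[OF sol] solution_vanishes[OF sol] t] .

lemma solution_integral_mono:
  assumes sol: "solution \<phi> L" and st: "s \<le> t" and t: "ereal t < L"
  shows "integral {0..s} \<phi> \<le> integral {0..t} \<phi>"
  using st
proof (rule DERIV_nonneg_imp_nondecreasing)
  fix x assume "s \<le> x" "x \<le> t"
  then have "ereal x < L" using ereal_le_less_trans t by blast
  then show "\<exists>y. ((\<lambda>x. integral {0..x} \<phi>) has_real_derivative y) (at x) \<and> 0 \<le> y"
    using solution_integral_DERIV[OF sol] solution_nonneg[OF sol] by blast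
qed

lemma solution_integral_pos:
  assumes sol: "solution \<phi> L" and t: "0 < t" "ereal t < L"
  shows "0 < integral {0..t} \<phi>"
proof -
  have "\<And>x. 0 \<le> x \<Longrightarrow> x \<le> t \<Longrightarrow> ((\<lambda>x. integral {0..x} \<phi>) has_real_derivative \<phi> x) (at x)"
    using t by (intro solution_integral_DERIV[OF sol]) (auto intro: ereal_le_less_trans)
  from MVT2[OF t(1) this] obtain \<xi> where "0 < \<xi>" "\<xi> < t"
    and "integral {0..t} \<phi> - integral {0..0} \<phi> = (t - 0) * \<phi> \<xi>" by blast
  then show ?thesis
    using solution_pos[OF sol \<open>0 < \<xi>\<close>] t ereal_le_less_trans[of \<xi> t L] by simp
qed

lemma solution_mass_balance_DERIV:
  assumes sol: "solution \<phi> L" and t: "ereal t < L"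
  shows "((\<lambda>t. D * \<phi> t powr m - c * integral {0..t} \<phi>) has_real_derivative
    integral {0..t} (net_death \<phi>)) (at t)"
proof -
  have "((\<lambda>t. D * \<phi> t powr m - c * integral {0..t} \<phi>) has_real_derivative
      D * deriv (\<lambda>s. \<phi> s powr m) t - c * \<phi> t) (at t)"
    by (intro DERIV_diff DERIV_cmult solution_powr_DERIV[OF sol t] solution_integral_DERIV[OF sol t])
  then show ?thesis using solution_deriv_powr_eq[OF sol t] by simp
qed

lemma solution_tendsto_at_lifespan:
  assumes sol: "solution \<phi> (ereal T)" and bounded: "\<And>t. t < T \<Longrightarrow> \<phi> t \<le> R"
    and d_nonneg: "\<And>s. 0 \<le> s \<Longrightarrow> 0 \<le> d s" and b_le: "\<And>s. 0 \<le> s \<Longrightarrow> b s \<le> B"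
  shows "\<exists>p\<ge>0. (\<phi> \<longlongrightarrow> p) (at_left T)"
proof -
  define U where "U t = \<phi> t powr m" for t
  have life: "ereal t < ereal T" if "t < T" for t using that by simp
  have T: "0 < T" using solution_L_pos[OF sol] by (simp add: zero_ereal_def)
  have B: "0 \<le> B" using b_le[of 0] b_0 by simp
  have U_der: "(U has_real_derivative deriv U t) (at t)" if "t < T" for t
    unfolding U_def by (rule solution_powr_DERIV[OF sol life[OF that]])
  have "- (B * T / D) \<le> deriv U t" if t: "t < T" for t
  proof -
    have "- (B * T) \<le> integral {0..t} (net_death \<phi>)"
    proof (cases "0 \<le> t")
      case True
      have "integral {0..t} (\<lambda>_. - B) \<le> integral {0..t} (net_death \<phi>)"
      proof (rule integral_le)
        have "continuous_on {..t} \<phi>"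
          by (rule continuous_on_subset[OF solution_cont[OF sol]]) (use t in auto)
        then have "continuous_on {..t} (net_death \<phi>)"
          by (rule continuous_on_net_death[rotated 2]) (use t solution_nonneg[OF sol] in auto)
        then show "net_death \<phi> integrable_on {0..t}"
          by (rule integrable_continuous_interval[OF continuous_on_subset]) auto
        fix s assume "s \<in> {0..t}"
        then show "- B \<le> net_death \<phi> s"
          using d_nonneg[OF solution_nonneg[OF sol, of s]] b_le[OF solution_nonneg[OF sol, of "s - c * r"]] t
            delay_pos by (simp add: net_death_def)
      qed (rule integrable_const_ivl)
      moreover have "t * B \<le> T * B" using t B by (intro mult_right_mono) auto
      ultimately show ?thesis using True by (simp add: mult.commute)
    qed (use B T in simp)
    moreover have "D * deriv U t = c * \<phi> t + integral {0..t} (net_death \<phi>)"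
      unfolding U_def by (rule solution_deriv_powr_eq[OF sol life[OF t]])
    moreover have "0 \<le> c * \<phi> t" using solution_nonneg[OF sol life[OF t]] c_pos by simp
    ultimately have "- (B * T) \<le> deriv U t * D" by (simp add: mult.commute)
    then show ?thesis using D_pos by (simp only: minus_divide_left pos_divide_le_eq)
  qed
  moreover have "U t \<le> R powr m" if "t < T" for t
    unfolding U_def using solution_nonneg[OF sol life[OF that]] bounded[OF that] m_gt_1
    by (intro powr_mono2) auto
  ultimately obtain l where l: "(U \<longlongrightarrow> l) (at_left T)"
    using tendsto_at_left_of_derivative_bounded_below[where T = T, OF U_der] by blast
  have "0 \<le> l" by (rule tendsto_lowerbound[OF l]) (auto simp: U_def)
  have "\<forall>\<^sub>F t in at_left T. U t powr (1 / m) = \<phi> t"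
    unfolding eventually_at_filter
    using solution_nonneg[OF sol] m_gt_1 by (auto simp: U_def powr_powr)
  moreover have "((\<lambda>t. U t powr (1 / m)) \<longlongrightarrow> l powr (1 / m)) (at_left T)"
    using m_gt_1 by (intro tendsto_powr'[OF l tendsto_const]) (auto simp: U_def)
  ultimately have "(\<phi> \<longlongrightarrow> l powr (1 / m)) (at_left T)" by (blast intro: Lim_transform_eventually)
  then show ?thesis by (intro exI[of _ "l powr (1 / m)"]) simp
qed

lemma solution_powr_DERIV_of_agree:
  assumes sol: "solution \<phi> (ereal L)" and agree: "\<And>s. s < L \<Longrightarrow> \<psi> s = \<phi> s" and t: "t < L"
  shows "((\<lambda>s. \<psi> s powr m) has_real_derivative (c * \<psi> t + integral {0..t} (net_death \<psi>)) / D) (at t)"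
proof -
  have "integral {0..t} (net_death \<phi>) = integral {0..t} (net_death \<psi>)"
    by (rule integral_cong) (use t delay_pos in \<open>auto simp: net_death_def agree\<close>)
  then have "deriv (\<lambda>s. \<phi> s powr m) t = (c * \<psi> t + integral {0..t} (net_death \<psi>)) / D"
    using solution_deriv_powr_eq[OF sol, of t] D_pos agree[OF t] t by (simp add: field_simps)
  then have "((\<lambda>s. \<phi> s powr m) has_real_derivative (c * \<psi> t + integral {0..t} (net_death \<psi>)) / D) (at t)"
    using solution_powr_DERIV[OF sol, of t] t by simp
  then show ?thesis
    by (rule has_field_derivative_transform_within_open[of _ _ _ "{..<L}"]) (use t agree in auto)
qed

lemma solution_glue:
  assumes sol: "solution \<phi> (ereal L)" and h: "0 < h"
    and \<psi>_def: "\<psi> = (\<lambda>t. if t < L then \<phi> t else y t powr (1/m))"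
    and lim: "(\<phi> \<longlongrightarrow> y L powr (1/m)) (at_left L)"
    and y_cont: "continuous_on {L..L+h} y" and y_pos: "\<And>t. t \<in> {L..L+h} \<Longrightarrow> 0 < y t"
    and y_eq: "\<And>t. t \<in> {L..L+h} \<Longrightarrow> y t = y L + integral {L..t}
        (\<lambda>s. (c * \<psi> s + integral {0..L} (net_death \<psi>) + integral {L..s} (net_death \<psi>)) / D)"
  shows "solution \<psi> (ereal (L + h))"
proof -
  have L: "0 < L" using solution_L_pos[OF sol] by (simp add: zero_ereal_def)
  have \<psi>_left: "\<psi> t = \<phi> t" if "t < L" for t using that by (simp add: \<psi>_def)
  have \<psi>_right: "\<psi> t = y t powr (1/m)" if "L \<le> t" for t using that by (simp add: \<psi>_def)
  have pos: "0 < \<psi> t" if "0 < t" "t \<le> L + h" for t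
    using that solution_pos[OF sol, of t] y_pos[of t] by (cases "t < L") (auto simp: \<psi>_def)
  have vanish: "\<psi> t = 0" if "t \<le> 0" for t using that L solution_vanishes[OF sol] by (simp add: \<psi>_def)
  have nonneg: "0 \<le> \<psi> t" for t using solution_nonneg[OF sol] by (simp add: \<psi>_def)
  have \<psi>_cont: "continuous_on {..L+h} \<psi>"
    unfolding \<psi>_def
  proof (rule continuous_on_if_less_of_tendsto[where g = "\<lambda>t. y t powr (1/m)", OF _ lim])
    show "continuous_on {..<L} \<phi>" using solution_cont[OF sol] by (simp add: lessThan_def)
    show "continuous_on {L..L+h} (\<lambda>t. y t powr (1/m))"
      using y_pos m_gt_1 by (intro continuous_on_powr' y_cont continuous_on_const) (auto intro: less_imp_le)
  qed (use h in simp)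
  have k_cont: "continuous_on {..L+h} (net_death \<psi>)"
    by (rule continuous_on_net_death[OF _ nonneg \<psi>_cont]) auto
  define W where "W t = (c * \<psi> t + integral {0..t} (net_death \<psi>)) / D" for t
  have W_cont: "continuous_on {0..L+h} W"
  proof -
    have "(net_death \<psi>) integrable_on {0..L+h}"
      by (rule integrable_continuous_interval[OF continuous_on_subset[OF k_cont]]) auto
    then show ?thesis
      unfolding W_def using D_pos continuous_on_subset[OF \<psi>_cont, of "{0..L+h}"]
      by (intro continuous_intros indefinite_integral_continuous_1) auto
  qed
  have left: "((\<lambda>s. \<psi> s powr m) has_real_derivative W t) (at t)" if "t < L" for t
    using solution_powr_DERIV_of_agree[OF sol _ that, of \<psi>] \<psi>_left by (simp add: W_def)
  have right: "\<psi> t powr m = \<psi> L powr m + integral {L..t} W" if t: "L \<le> t" "t \<le> L + h" for t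
  proof -
    have powr_y: "\<psi> s powr m = y s" if "s \<in> {L..L+h}" for s
      using y_pos[OF that] that m_gt_1 by (simp add: \<psi>_right powr_powr)
    have split: "integral {0..s} (net_death \<psi>) = integral {0..L} (net_death \<psi>) + integral {L..s} (net_death \<psi>)"
      if "s \<in> {L..L+h}" for s
      using that L by (intro Henstock_Kurzweil_Integration.integral_combine[symmetric]
          integrable_continuous_interval continuous_on_subset[OF k_cont]) auto
    have "integral {L..t} W = integral {L..t}
        (\<lambda>s. (c * \<psi> s + integral {0..L} (net_death \<psi>) + integral {L..s} (net_death \<psi>)) / D)"
    proof (rule integral_cong)
      fix s assume "s \<in> {L..t}"
      then show "W s = (c * \<psi> s + integral {0..L} (net_death \<psi>) + integral {L..s} (net_death \<psi>)) / D"
        using split[of s] t by (simp add: W_def)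
    qed
    then show ?thesis using y_eq[of t] powr_y[of t] powr_y[of L] t h by simp
  qed
  have der: "((\<lambda>s. \<psi> s powr m) has_real_derivative W t) (at t)" if "t < L + h" for t
  proof (cases "t < L")
    case False
    have U_cont: "continuous_on {0..L} (\<lambda>s. \<psi> s powr m)"
      using nonneg m_gt_1 continuous_on_subset[OF \<psi>_cont, of "{0..L}"] h
      by (intro continuous_on_powr' continuous_on_const) auto
    show ?thesis
      by (rule DERIV_glue_integral[of 0 L t "L + h", OF _ _ _ U_cont W_cont _ right])
        (use L False that left in auto)
  qed (rule left)
  show ?thesis
  proof (rule solutionI)
    show "continuous_on {t. ereal t < ereal (L + h)} \<psi>"
      by (rule continuous_on_subset[OF \<psi>_cont]) auto
  qed (use L h vanish pos der in \<open>auto simp: W_def\<close>)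
qed

lemma solution_extends_past_positive_limit:
  assumes sol: "solution \<phi> (ereal L)" and lim: "(\<phi> \<longlongrightarrow> p) (at_left L)" and p: "0 < p"
    and b_bound: "\<And>s. 0 \<le> s \<Longrightarrow> \<bar>b s\<bar> \<le> B" and d_lip: "\<And>R. \<exists>K. K-lipschitz_on {0..R} d"
  shows "\<exists>\<psi> h. 0 < h \<and> solution \<psi> (ereal (L + h)) \<and> (\<forall>t<L. \<psi> t = \<phi> t)"
proof -
  have L: "0 < L" using solution_L_pos[OF sol] by (simp add: zero_ereal_def)
  define \<phi>' where "\<phi>' t = (if t < L then \<phi> t else p)" for t
  have \<phi>'_cont: "continuous_on {..L} \<phi>'"
    unfolding \<phi>'_def using solution_cont[OF sol] lim
    by (intro continuous_on_if_less_of_tendsto[where g = "\<lambda>_. p"]) (auto simp: lessThan_def)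
  have \<phi>'_nonneg: "0 \<le> \<phi>' t" for t using solution_nonneg[OF sol] p by (simp add: \<phi>'_def)
  define g where "g s = b (\<phi>' (s - c * r))" for s
  have "continuous_on {L..L + c * r} (\<lambda>s. \<phi>' (s - c * r))"
    by (rule continuous_on_compose2[OF \<phi>'_cont]) (auto intro!: continuous_intros)
  then have g_cont: "continuous_on {L..L + c * r} g"
    unfolding g_def by (rule continuous_on_compose2[OF b_cont]) (auto simp: \<phi>'_nonneg)
  have g_bound: "\<bar>g s\<bar> \<le> B" for s unfolding g_def using b_bound \<phi>'_nonneg by simp
  define C where "C = integral {0..L} (net_death \<phi>')"
  obtain h y where h: "0 < h" "h \<le> c * r" and y_cont: "continuous_on UNIV y"
    and y: "\<forall>t\<in>{L..L+h}. 0 < y t \<and> y t = p powr m + integral {L..t}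
      (\<lambda>s. (c * y s powr (1/m) + C + integral {L..s} (\<lambda>\<sigma>. d (y \<sigma> powr (1/m)) - g \<sigma>)) / D)"
    using iterated_integral_equation_positive_solution[of D c "1/m" "p powr m" "c * r" d L g B C]
      D_pos c_pos m_gt_1 p delay_pos d_lip g_cont g_bound
    by (auto simp: less_imp_le)
  define \<psi> where "\<psi> = (\<lambda>t. if t < L then \<phi> t else y t powr (1/m))"
  have y_L: "y L = p powr m" using y h by auto
  have \<psi>_left: "\<psi> t = \<phi>' t" if "t \<le> L" for t
    using that y_L p m_gt_1 by (auto simp: \<psi>_def \<phi>'_def powr_powr)
  have net_death_left: "net_death \<psi> s = net_death \<phi>' s" if "s \<le> L" for s
    using that delay_pos by (simp add: net_death_def \<psi>_left)
  have net_death_right: "net_death \<psi> s = d (y s powr (1/m)) - g s" if "s \<in> {L..L+h}" for s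
    using that h \<psi>_left[of "s - c * r"] by (simp add: net_death_def g_def \<psi>_def)
  have "solution \<psi> (ereal (L + h))"
  proof (rule solution_glue[OF sol h(1) \<psi>_def])
    show "(\<phi> \<longlongrightarrow> y L powr (1/m)) (at_left L)" using lim y_L p m_gt_1 by (simp add: powr_powr)
    show "continuous_on {L..L+h} y" using y_cont by (rule continuous_on_subset) simp
    show "0 < y t" if "t \<in> {L..L+h}" for t using y that by blast
    fix t assume t: "t \<in> {L..L+h}"
    have "integral {0..L} (net_death \<psi>) = C"
      unfolding C_def by (rule integral_cong) (simp add: net_death_left)
    moreover have "integral {L..s} (net_death \<psi>) = integral {L..s} (\<lambda>\<sigma>. d (y \<sigma> powr (1/m)) - g \<sigma>)"
      if "s \<in> {L..t}" for s
      by (rule integral_cong) (use that t in \<open>simp add: net_death_right\<close>)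
    moreover have "c * \<psi> s = c * y s powr (1/m)" if "s \<in> {L..t}" for s using that by (simp add: \<psi>_def)
    ultimately have "integral {L..t}
        (\<lambda>s. (c * \<psi> s + integral {0..L} (net_death \<psi>) + integral {L..s} (net_death \<psi>)) / D) =
        integral {L..t} (\<lambda>s. (c * y s powr (1/m) + C + integral {L..s} (\<lambda>\<sigma>. d (y \<sigma> powr (1/m)) - g \<sigma>)) / D)"
      by (intro integral_cong) auto
    then show "y t = y L + integral {L..t}
        (\<lambda>s. (c * \<psi> s + integral {0..L} (net_death \<psi>) + integral {L..s} (net_death \<psi>)) / D)"
      using y t y_L by auto
  qed
  then show ?thesis using h by (intro exI[of _ \<psi>] exI[of _ h]) (auto simp: \<psi>_def)
qed

end

section \<open>A priori bounds for small speeds\<close>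

locale delayed_wave_near_zero = delayed_wave +
  fixes \<epsilon> \<delta> \<beta> :: real
  assumes eps_pos: "0 < \<epsilon>" and beta_nonneg: "0 \<le> \<beta>" and delta_less_beta: "\<delta> < \<beta>"
    and d_le: "\<And>s. s \<in> {0..\<epsilon>} \<Longrightarrow> d s \<le> \<delta> * s"
    and b_ge: "\<And>s. s \<in> {0..\<epsilon>} \<Longrightarrow> \<beta> * s \<le> b s"
begin

lemma solution_integral_net_death_le:
  assumes sol: "solution \<phi> L" and T: "ereal T < L" and small: "\<And>s. s \<le> T \<Longrightarrow> \<phi> s \<le> \<epsilon>"
    and t: "0 \<le> t" "t \<le> T"
  shows "integral {0..t} (net_death \<phi>) \<le> \<delta> * integral {0..t} \<phi> - \<beta> * integral {0..t - c * r} \<phi>"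
proof -
  define I where "I x = integral {0..x} \<phi>" for x
  define H where "H x = integral {0..x} (net_death \<phi>) - \<delta> * I x + \<beta> * I (x - c * r)" for x
  have before_T: "ereal x < L" if "x \<le> T" for x using ereal_le_less_trans[OF that T] .
  have range: "\<phi> s \<in> {0..\<epsilon>}" if "s \<le> T" for s
    using solution_nonneg[OF sol before_T[OF that]] small[OF that] by simp
  have "H t \<le> H 0"
  proof (rule DERIV_nonpos_imp_nonincreasing[OF t(1)])
    fix x assume x: "0 \<le> x" "x \<le> t"
    have x_T: "x \<le> T" "x - c * r \<le> T" using x t delay_pos by auto
    have "((\<lambda>x. x - c * r) has_real_derivative 1) (at x)" by (auto intro!: derivative_eq_intros)
    from DERIV_chain2[OF solution_integral_DERIV[OF sol before_T[OF x_T(2)]] this]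
    have "((\<lambda>x. I (x - c * r)) has_real_derivative \<phi> (x - c * r)) (at x)" by (simp add: I_def)
    then have "(H has_real_derivative net_death \<phi> x - \<delta> * \<phi> x + \<beta> * \<phi> (x - c * r)) (at x)"
      unfolding H_def I_def
      by (intro DERIV_add DERIV_diff DERIV_cmult solution_integral_net_death_DERIV[OF sol before_T]
          solution_integral_DERIV[OF sol before_T] x_T)
    moreover have "net_death \<phi> x - \<delta> * \<phi> x + \<beta> * \<phi> (x - c * r) \<le> 0"
      using d_le[OF range[OF x_T(1)]] b_ge[OF range[OF x_T(2)]] by (simp add: net_death_def)
    ultimately show "\<exists>y. (H has_real_derivative y) (at x) \<and> y \<le> 0" by blast
  qed
  moreover have "{0..- (c * r)} = {}" using delay_pos by simp
  ultimately show ?thesis by (simp add: H_def I_def)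
qed

lemma solution_deriv_powr_le:
  assumes sol: "solution \<phi> L" and T: "ereal T < L" and small: "\<And>s. s \<le> T \<Longrightarrow> \<phi> s \<le> \<epsilon>"
    and t: "0 \<le> t" "t \<le> T"
  shows "D * deriv (\<lambda>s. \<phi> s powr m) t \<le> c * \<epsilon> * (1 + \<beta> * r) - (\<beta> - \<delta>) * integral {0..t} \<phi>"
proof -
  define I where "I x = integral {0..x} \<phi>" for x
  have before_T: "ereal x < L" if "x \<le> T" for x using ereal_le_less_trans[OF that T] .
  have I_der: "(I has_real_derivative \<phi> x) (at x)" if "t - c * r \<le> x" "x \<le> t" for x
    unfolding I_def using that t by (intro solution_integral_DERIV[OF sol before_T]) auto
  have "t - c * r < t" using delay_pos by simp
  from MVT2[OF this I_der] obtain \<xi> where \<xi>: "t - c * r < \<xi>" "\<xi> < t"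
    and eq: "I t - I (t - c * r) = (t - (t - c * r)) * \<phi> \<xi>" by blast
  have "\<phi> \<xi> \<le> \<epsilon>" using small \<xi> t by simp
  then have "I t - I (t - c * r) \<le> c * r * \<epsilon>" using eq mult_left_mono[of "\<phi> \<xi>" \<epsilon> "c * r"] delay_pos by simp
  then have shift: "\<beta> * I t - \<beta> * (c * r * \<epsilon>) \<le> \<beta> * I (t - c * r)"
    using mult_left_mono[OF _ beta_nonneg] by (fastforce simp: right_diff_distrib[symmetric])
  have "D * deriv (\<lambda>s. \<phi> s powr m) t = c * \<phi> t + integral {0..t} (net_death \<phi>)"
    using solution_deriv_powr_eq[OF sol before_T[OF t(2)]] .
  also have "\<dots> \<le> c * \<epsilon> + (\<delta> * I t - \<beta> * I (t - c * r))"
    using small[OF t(2)] c_pos solution_integral_net_death_le[OF sol T small t] unfolding I_def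
    by (intro add_mono) auto
  also have "\<dots> \<le> c * \<epsilon> + (\<delta> * I t - (\<beta> * I t - \<beta> * (c * r * \<epsilon>)))" using shift by linarith
  also have "\<dots> = c * \<epsilon> * (1 + \<beta> * r) - (\<beta> - \<delta>) * I t" by (simp add: algebra_simps)
  finally show ?thesis unfolding I_def .
qed

lemma solution_energy_bound:
  assumes sol: "solution \<phi> L" and T: "0 \<le> T" "ereal T < L" and small: "\<And>s. s \<le> T \<Longrightarrow> \<phi> s \<le> \<epsilon>"
  shows "m / (m + 1) * \<phi> T powr (m + 1) \<le>
    (c * \<epsilon> * (1 + \<beta> * r) * integral {0..T} \<phi> - (\<beta> - \<delta>) * (integral {0..T} \<phi>)\<^sup>2 / 2) / D"
proof -
  define I where "I x = integral {0..x} \<phi>" for x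
  define U where "U x = \<phi> x powr m" for x
  define A where "A = c * \<epsilon> * (1 + \<beta> * r)"
  define E where "E x = m / (m + 1) * U x powr ((m + 1) / m) - (A * I x - (\<beta> - \<delta>) * (I x)\<^sup>2 / 2) / D" for x
  have before_T: "ereal x < L" if "x \<le> T" for x using ereal_le_less_trans[OF that T(2)] .
  have U_der: "(U has_real_derivative deriv U x) (at x)" if "x \<le> T" for x
    unfolding U_def by (rule solution_powr_DERIV[OF sol before_T[OF that]])
  have I_der: "(I has_real_derivative \<phi> x) (at x)" if "x \<le> T" for x
    unfolding I_def by (rule solution_integral_DERIV[OF sol before_T[OF that]])
  have "continuous_on {0..T} E"
  proof -
    have U_cont: "continuous_on {0..T} U" and I_cont: "continuous_on {0..T} I"
      using U_der I_der by (auto intro!: continuous_at_imp_continuous_on DERIV_continuous)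
    have V_cont: "continuous_on {0..T} (\<lambda>x. U x powr ((m + 1) / m))"
      using m_gt_1 by (intro continuous_on_powr'[OF U_cont continuous_on_const]) (simp add: U_def)
    show ?thesis unfolding E_def by (intro V_cont I_cont continuous_intros) (use D_pos in auto)
  qed
  moreover have "\<exists>y. (E has_real_derivative y) (at x) \<and> y \<le> 0" if x: "0 < x" "x < T" for x
  proof -
    have \<phi>_pos: "0 < \<phi> x" using solution_pos[OF sol x(1) before_T] x by simp
    have "U x powr ((m + 1) / m - 1) = \<phi> x"
      using \<phi>_pos m_gt_1 by (simp add: U_def powr_powr add_divide_distrib)
    then have V_der: "((\<lambda>x. U x powr ((m + 1) / m)) has_real_derivative (m + 1) / m * \<phi> x * deriv U x) (at x)"
      using DERIV_fun_powr[OF U_der, of x "(m + 1) / m"] x \<phi>_pos by (simp add: U_def)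
    have I2_der: "((\<lambda>x. (I x)\<^sup>2) has_real_derivative 2 * I x * \<phi> x) (at x)"
      using I_der[of x] x by (auto intro!: derivative_eq_intros)
    define E' where "E' = m / (m + 1) * ((m + 1) / m * \<phi> x * deriv U x)
      - (A * \<phi> x - (\<beta> - \<delta>) * (2 * I x * \<phi> x) / 2) / D"
    have "(E has_real_derivative E') (at x)"
      unfolding E_def E'_def
      by (intro DERIV_diff DERIV_cmult DERIV_cdivide V_der I2_der I_der) (use x in simp)
    moreover have "m / (m + 1) * ((m + 1) / m * \<phi> x * deriv U x) = \<phi> x * deriv U x"
      using m_gt_1 by simp
    then have "E' = \<phi> x * (D * deriv U x - (A - (\<beta> - \<delta>) * I x)) / D"
      unfolding E'_def using D_pos by (simp add: field_simps)
    moreover have "D * deriv U x \<le> A - (\<beta> - \<delta>) * I x"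
      using solution_deriv_powr_le[OF sol T(2) small, of x] x unfolding U_def A_def I_def by simp
    ultimately show ?thesis
      using \<phi>_pos D_pos by (intro exI[of _ E']) (simp add: divide_nonpos_pos mult_nonneg_nonpos)
  qed
  ultimately have "E T \<le> E 0" by (intro DERIV_nonpos_imp_decreasing_open[OF T(1)]) auto
  moreover have "E 0 = 0" using solution_vanishes[OF sol, of 0] by (simp add: E_def I_def U_def)
  ultimately have "E T \<le> 0" by linarith
  moreover have "U T powr ((m + 1) / m) = \<phi> T powr (m + 1)"
    using solution_nonneg[OF sol T(2)] m_gt_1 by (simp add: U_def powr_powr)
  ultimately show ?thesis by (simp add: E_def I_def A_def)
qed

lemma solution_less_eps:
  assumes sol: "solution \<phi> L"
    and c_small: "(c * \<epsilon> * (1 + \<beta> * r))\<^sup>2 < 2 * (\<beta> - \<delta>) * D * (m / (m + 1) * \<epsilon> powr (m + 1))"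
    and t: "ereal t < L"
  shows "\<phi> t < \<epsilon>"
proof (rule ccontr)
  assume "\<not> \<phi> t < \<epsilon>"
  then have above: "\<epsilon> \<le> \<phi> t" by simp
  then have "0 \<le> t" using solution_vanishes[OF sol, of t] eps_pos by (cases "t \<le> 0") auto
  moreover have "continuous_on {0..t} \<phi>"
    using t by (intro continuous_on_subset[OF solution_cont[OF sol]]) (auto intro: ereal_le_less_trans)
  ultimately obtain T where T: "T \<in> {0..t}" "\<phi> T = \<epsilon>" and first: "\<forall>s\<in>{0..T}. \<phi> s \<le> \<epsilon>"
    using first_hitting_time[of 0 t \<phi> \<epsilon>] above solution_vanishes[OF sol, of 0] eps_pos by auto
  have small: "\<phi> s \<le> \<epsilon>" if "s \<le> T" for s
    using first that solution_vanishes[OF sol, of s] eps_pos by (cases "s \<le> 0") auto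
  define A where "A = c * \<epsilon> * (1 + \<beta> * r)"
  define \<gamma> where "\<gamma> = \<beta> - \<delta>"
  define I where "I = integral {0..T} \<phi>"
  have \<gamma>: "0 < \<gamma>" using delta_less_beta by (simp add: \<gamma>_def)
  have "m / (m + 1) * \<epsilon> powr (m + 1) \<le> (A * I - \<gamma> * I\<^sup>2 / 2) / D"
    using solution_energy_bound[where T = T, OF sol _ ereal_le_less_trans[OF _ t] small] T
    by (simp add: A_def \<gamma>_def I_def)
  also have "\<dots> \<le> A\<^sup>2 / (2 * \<gamma>) / D"
  proof -
    have "A\<^sup>2 / (2 * \<gamma>) - (A * I - \<gamma> * I\<^sup>2 / 2) = (A - \<gamma> * I)\<^sup>2 / (2 * \<gamma>)"
      using \<gamma> by (simp add: field_simps power2_eq_square)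
    then have "A * I - \<gamma> * I\<^sup>2 / 2 \<le> A\<^sup>2 / (2 * \<gamma>)" using \<gamma> by (smt (verit) divide_nonneg_pos zero_le_power2)
    then show ?thesis using D_pos by (intro divide_right_mono) auto
  qed
  also have "\<dots> < m / (m + 1) * \<epsilon> powr (m + 1)"
    using c_small \<gamma> D_pos by (simp add: A_def \<gamma>_def divide_less_eq mult.commute mult.left_commute)
  finally show False by simp
qed

lemma solution_integral_bounded:
  assumes sol: "solution \<phi> L" and below: "\<And>t. ereal t < L \<Longrightarrow> \<phi> t \<le> \<epsilon>" and t: "ereal t < L"
  shows "integral {0..t} \<phi> \<le> 2 * (c * \<epsilon> * (1 + \<beta> * r)) / (\<beta> - \<delta>)"
proof (cases "t \<le> 0")
  case True
  have "integral {0..t} \<phi> = 0" using True by (cases "t = 0") auto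
  then show ?thesis using c_pos eps_pos beta_nonneg r_pos delta_less_beta by simp
next
  case False
  define A where "A = c * \<epsilon> * (1 + \<beta> * r)"
  define I where "I = integral {0..t} \<phi>"
  have small: "\<phi> s \<le> \<epsilon>" if "s \<le> t" for s using below ereal_le_less_trans[OF that t] .
  have "0 \<le> I"
    unfolding I_def using False solution_nonneg[OF sol] t
    by (intro integral_nonneg integrable_continuous_interval continuous_on_subset[OF solution_cont[OF sol]])
      (auto intro: ereal_le_less_trans)
  have "0 \<le> m / (m + 1) * \<phi> t powr (m + 1)" using m_gt_1 by simp
  also have "\<dots> \<le> (A * I - (\<beta> - \<delta>) * I\<^sup>2 / 2) / D"
    using solution_energy_bound[OF sol _ t small] False by (simp add: A_def I_def)
  finally have "0 \<le> A * I - (\<beta> - \<delta>) * I\<^sup>2 / 2"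
    using D_pos by (simp add: zero_le_divide_iff)
  also have "\<dots> = I * (A - (\<beta> - \<delta>) * I / 2)" by (simp add: power2_eq_square algebra_simps)
  finally have "I = 0 \<or> (\<beta> - \<delta>) * I \<le> 2 * A"
    using \<open>0 \<le> I\<close> by (auto simp: zero_le_mult_iff)
  moreover have "0 \<le> A" using c_pos eps_pos beta_nonneg r_pos by (simp add: A_def)
  ultimately have "I * (\<beta> - \<delta>) \<le> 2 * A" by (auto simp: mult.commute)
  then show ?thesis using delta_less_beta by (simp add: I_def A_def pos_le_divide_eq)
qed

lemma solution_lifespan_finite:
  assumes sol: "solution \<phi> L" and below: "\<And>t. ereal t < L \<Longrightarrow> \<phi> t \<le> \<epsilon>"
  shows "L \<noteq> \<infinity>"
proof
  assume "L = \<infinity>"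
  then have life: "ereal t < L" for t by simp
  define I where "I t = integral {0..t} \<phi>" for t
  define K where "K t = integral {0..t} I" for t
  define Ib where "Ib = 2 * (c * \<epsilon> * (1 + \<beta> * r)) / (\<beta> - \<delta>)"
  define \<kappa> where "\<kappa> = (\<beta> - \<delta>) * I 1"
  define G where "G t = D * \<phi> t powr m - c * I t - \<beta> * (K t - K (t - c * r))" for t
  have I_der: "(I has_real_derivative \<phi> t) (at t)" for t
    unfolding I_def by (rule solution_integral_DERIV[OF sol life])
  have I_bound: "I t \<le> Ib" for t
    unfolding I_def Ib_def by (rule solution_integral_bounded[OF sol below life])
  have I_cont: "continuous_on UNIV I"
    using I_der by (intro continuous_at_imp_continuous_on) (auto intro: DERIV_continuous)
  have I_vanish: "I s = 0" if "s \<le> 0" for s using that by (cases "s = 0") (auto simp: I_def)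
  have K_der: "(K has_real_derivative I t) (at t)" for t
    unfolding K_def
    by (rule integral_from_zero_has_real_derivative[where L = \<infinity>, OF _ I_vanish])
      (auto intro: continuous_on_subset[OF I_cont])
  have \<kappa>: "0 < \<kappa>"
    using solution_integral_pos[OF sol zero_less_one life] delta_less_beta by (simp add: \<kappa>_def I_def)
  have G_der: "(G has_real_derivative
      integral {0..t} (net_death \<phi>) - \<beta> * (I t - I (t - c * r))) (at t)" for t
  proof -
    have "((\<lambda>x. x - c * r) has_real_derivative 1) (at t)" by (auto intro!: derivative_eq_intros)
    from DERIV_chain2[OF K_der this]
    have "((\<lambda>x. K (x - c * r)) has_real_derivative I (t - c * r)) (at t)" by simp
    moreover have "((\<lambda>t. D * \<phi> t powr m - c * I t) has_real_derivative integral {0..t} (net_death \<phi>)) (at t)"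
      using solution_mass_balance_DERIV[OF sol life] by (simp add: I_def)
    ultimately show ?thesis unfolding G_def by (intro DERIV_diff DERIV_cmult K_der)
  qed
  have G_der_le: "integral {0..t} (net_death \<phi>) - \<beta> * (I t - I (t - c * r)) \<le> - \<kappa>" if "1 \<le> t" for t
  proof -
    have "integral {0..t} (net_death \<phi>) \<le> \<delta> * I t - \<beta> * I (t - c * r)"
      unfolding I_def using that below life
      by (intro solution_integral_net_death_le[OF sol life]) auto
    moreover have "(\<beta> - \<delta>) * I 1 \<le> (\<beta> - \<delta>) * I t"
      using solution_integral_mono[OF sol that life] delta_less_beta
      by (intro mult_left_mono) (auto simp: I_def)
    ultimately show ?thesis unfolding \<kappa>_def by (simp add: algebra_simps)
  qed
  obtain t where "G t < - c * Ib - \<beta> * (c * r * Ib)"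
    using exists_less_of_DERIV_le_neg[OF G_der G_der_le \<kappa>] by blast
  moreover have "- c * Ib - \<beta> * (c * r * Ib) \<le> G t"
  proof -
    have "t - c * r < t" using delay_pos by simp
    from MVT2[OF this, of K I] K_der obtain \<xi> where "K t - K (t - c * r) = (t - (t - c * r)) * I \<xi>"
      by blast
    then have "K t - K (t - c * r) \<le> c * r * Ib"
      using I_bound[of \<xi>] delay_pos by (simp add: mult_left_mono)
    then have "\<beta> * (K t - K (t - c * r)) \<le> \<beta> * (c * r * Ib)" using beta_nonneg by (rule mult_left_mono)
    moreover have "c * I t \<le> c * Ib" using I_bound[of t] c_pos by simp
    moreover have "0 \<le> D * \<phi> t powr m" using D_pos by simp
    ultimately show ?thesis unfolding G_def by linarith
  qed
  ultimately show False by simp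
qed

lemma wave_profile_vanishes_in_finite_time:
  assumes profile: "wave_profile m D r b d c \<phi> L"
    and c_small: "(c * \<epsilon> * (1 + \<beta> * r))\<^sup>2 < 2 * (\<beta> - \<delta>) * D * (m / (m + 1) * \<epsilon> powr (m + 1))"
    and d_nonneg: "\<And>s. 0 \<le> s \<Longrightarrow> 0 \<le> d s" and b_bound: "\<And>s. 0 \<le> s \<Longrightarrow> \<bar>b s\<bar> \<le> B"
    and d_lip: "\<And>R. \<exists>K. K-lipschitz_on {0..R} d"
  shows "\<exists>T>0. L = ereal T \<and> (\<forall>t. 0 < t \<and> t < T \<longrightarrow> 0 < \<phi> t) \<and> (\<phi> \<longlongrightarrow> 0) (at_left T)"
proof -
  have sol: "solution \<phi> L" using profile by (simp add: wave_profile_def)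
  have below: "\<phi> t < \<epsilon>" if "ereal t < L" for t using solution_less_eps[OF sol c_small that] .
  obtain T where L: "L = ereal T" and T: "0 < T"
    using solution_lifespan_finite[OF sol] below solution_L_pos[OF sol] less_imp_le
    by (cases L) (auto simp: zero_ereal_def)
  obtain p where "0 \<le> p" and lim: "(\<phi> \<longlongrightarrow> p) (at_left T)"
    using solution_tendsto_at_lifespan[OF sol[unfolded L], of \<epsilon> B] below d_nonneg b_bound L
    by fastforce
  have "p = 0"
  proof (rule ccontr)
    assume "p \<noteq> 0"
    then obtain \<psi> h where "0 < h" and ext: "solution \<psi> (ereal (T + h))" "\<forall>t<T. \<psi> t = \<phi> t"
      using solution_extends_past_positive_limit[OF sol[unfolded L] lim _ b_bound d_lip] \<open>0 \<le> p\<close> by force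
    have maximal: "L' = L" if "solution \<psi>' L'" "L \<le> L'" "\<forall>t. ereal t < L \<longrightarrow> \<psi>' t = \<phi> t" for \<psi>' L'
      using profile that unfolding wave_profile_def by blast
    have "ereal (T + h) = L" using ext \<open>0 < h\<close> L by (intro maximal) auto
    then show False using \<open>0 < h\<close> L by simp
  qed
  then show ?thesis using T L lim solution_pos[OF sol] by auto
qed

end

theorem lemma5p2:
  fixes m D r \<kappa> sM :: real and b d b' d' d'' :: "real \<Rightarrow> real"
  assumes m: "m > 1" and D: "D > 0" and r: "r > 0"
    and d_C2: "\<forall>s\<ge>0. (d has_real_derivative d' s) (at s within {0..})
                    \<and> (d' has_real_derivative d'' s) (at s within {0..})"
    and d''_cont: "continuous_on {0..} d''"
    and d0: "d 0 = 0"
    and d'_pos: "\<forall>s>0. d' s > 0"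
    and d''_nonneg: "\<forall>s>0. d'' s \<ge> 0"
    and b_C1: "\<forall>s\<ge>0. (b has_real_derivative b' s) (at s within {0..})"
    and b'_cont: "continuous_on {0..} b'"
    and b_nonneg: "\<forall>s\<ge>0. b s \<ge> 0"
    and sM_pos: "sM > 0"
    and sM_max: "\<forall>s\<ge>0. b s \<le> b sM"
    and sM_unique: "\<forall>s>0. local_extremum_at b s \<longleftrightarrow> s = sM"
    and b0: "b 0 = 0"
    and kappa_pos: "\<kappa> > 0"
    and b_kappa: "b \<kappa> = d \<kappa>"
    and b'0: "b' 0 > d' 0"
    and b'kappa: "b' \<kappa> < d' \<kappa>"
    and between: "\<forall>s. 0 < s \<and> s < \<kappa> \<longrightarrow> d s < b s \<and> b s \<le> b' 0 * s"
    and sM_kappa: "sM < \<kappa>"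
  shows "\<exists>c0>0. \<forall>c. 0 < c \<and> c \<le> c0 \<longrightarrow>
           (\<forall>\<phi> L. wave_profile m D r b d c \<phi> L \<longrightarrow>
              (\<exists>T>0. L = ereal T \<and> (\<forall>t. 0 < t \<and> t < T \<longrightarrow> \<phi> t > 0)
                     \<and> (\<phi> \<longlongrightarrow> 0) (at_left T)))"
proof -
  have d_der: "\<forall>s\<ge>0. (d has_real_derivative d' s) (at s within {0..})"
    and d'_der: "\<forall>s\<ge>0. (d' has_real_derivative d'' s) (at s within {0..})" using d_C2 by auto
  note d'_cont = continuous_on_atLeast_of_DERIV[OF d'_der]
  have "0 \<le> d' 0"
    using continuous_ge_on_closure[of "{0<..}" d' 0 0] d'_cont d'_pos by (auto intro: less_imp_le)
  obtain \<epsilon> \<delta> \<beta> where near_zero: "0 < \<epsilon>" "0 \<le> \<beta>" "\<delta> < \<beta>"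
    "\<forall>s\<in>{0..\<epsilon>}. d s \<le> \<delta> * s" "\<forall>s\<in>{0..\<epsilon>}. \<beta> * s \<le> b s"
    using linear_bounds_of_derivative_gap[OF d_der d'_cont d0 b_C1 b'_cont b0 \<open>0 \<le> d' 0\<close> b'0] by blast
  obtain c\<^sub>0 where "0 < c\<^sub>0" and c\<^sub>0: "\<And>c. 0 < c \<Longrightarrow> c \<le> c\<^sub>0 \<Longrightarrow>
      (c * (\<epsilon> * (1 + \<beta> * r)))\<^sup>2 < 2 * (\<beta> - \<delta>) * D * (m / (m + 1) * \<epsilon> powr (m + 1))"
    using exists_bound_square_less[of "\<epsilon> * (1 + \<beta> * r)" "2 * (\<beta> - \<delta>) * D * (m / (m + 1) * \<epsilon> powr (m + 1))"]
      near_zero r D m by (auto simp: add_pos_nonneg)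
  have d_lip: "\<exists>K. K-lipschitz_on {0..R} d" for R
    using d_der continuous_on_subset[OF d'_cont, of "{0..R}"]
    by (intro lipschitz_on_interval_of_continuous_derivative) (auto intro: DERIV_subset)
  show ?thesis
  proof (rule exI[of _ c\<^sub>0], intro conjI allI impI \<open>0 < c\<^sub>0\<close>)
    fix c \<phi> L assume c: "0 < c \<and> c \<le> c\<^sub>0" and profile: "wave_profile m D r b d c \<phi> L"
    interpret delayed_wave_near_zero m D r c b d \<epsilon> \<delta> \<beta>
      using c m D r d0 b0 near_zero continuous_on_atLeast_of_DERIV[OF d_der]
        continuous_on_atLeast_of_DERIV[OF b_C1] by unfold_locales auto
    show "\<exists>T>0. L = ereal T \<and> (\<forall>t. 0 < t \<and> t < T \<longrightarrow> 0 < \<phi> t) \<and> (\<phi> \<longlongrightarrow> 0) (at_left T)"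
    proof (rule wave_profile_vanishes_in_finite_time[OF profile _ _ _ d_lip])
      show "(c * \<epsilon> * (1 + \<beta> * r))\<^sup>2 < 2 * (\<beta> - \<delta>) * D * (m / (m + 1) * \<epsilon> powr (m + 1))"
        using c\<^sub>0 c by (simp add: mult.assoc)
      show "0 \<le> d s" if "0 \<le> s" for s
        using nonneg_of_DERIV_nonneg_atLeast[OF d_der _ d0 that] d'_pos by (simp add: less_imp_le)
      show "\<bar>b s\<bar> \<le> b sM" if "0 \<le> s" for s using that b_nonneg sM_max by auto
    qed
  qed
qed

end
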